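(* Let $G$ be a progressive graph and let $\phi$ be an upward BP-embedding of $G$. Then the linear order $\prec_\phi$ on $E(G)$ obtained from any layer decomposition of $\phi$ (as described in the context) is a planar order on $G$.
   Context: A progressive graph is a finite directed acyclic graph (parallel edges allowed) in which every source and every sink has degree one. Degree-one vertices are boundary vertices, the others internal vertices. An input edge is an edge whose initial vertex is a boundary vertex; an output edge is one whose terminal vertex is a boundary vertex. For edges write $e\to e'$ if $e\neq e'$ and there is a directed path whose first edge is $e$ and last edge is $e'$. For a vertex $v$, $I(v)$, $O(v)$ are its sets of incoming and outgoing edges. A planar order on $G$ is a linear order $\prec$ on $E(G)$ such that (P1) $e_1\to e_2$ implies $e_1\prec e_2$; (P2) if $e_1\prec e_2\prec e_3$ and $e_1\to e_3$, then $e_1\to e_2$ or $e_2\to e_3$. A POP-graph is a progressive graph with a planar order. Composition: let $(G_1,\prec_1)$, $(G_2,\prec_2)$ be progressive graphs with linear orders on their edges, where $G_1$ has output edges $o_1\prec_1\cdots\prec_1 o_n$ and $G_2$ has input edges $i_1\prec_2\cdots\prec_2 i_n$. The graph $G_2\circ G_1$ is obtained from $G_1\sqcup G_2$ by deleting the sinks of $G_1$, the sources of $G_2$ and the edges $o_k,i_k$, and adding for each $k$ a new edge $\overline{e_k}$ from the initial vertex of $o_k$ to the terminal vertex of $i_k$. Let $Q_1=\{e: e\prec_1 o_1\}$, $Q_k=\{e: o_{k-1}\prec_1 e\prec_1 o_k\}$ ($2\le k\le n$), $P_k=\{e: i_k\prec_2 e\prec_2 i_{k+1}\}$ ($1\le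 k\le n-1$), $P_n=\{e: i_n\prec_2 e\}$. Then $\prec_2\circ\prec_1$ is the linear order on $E(G_2\circ G_1)$ listing $Q_1,\{\overline{e_1}\},P_1,Q_2,\{\overline{e_2}\},P_2,\dots,Q_n,\{\overline{e_n}\},P_n$ consecutively, each $Q_k$ ordered by $\prec_1$ and each $P_k$ by $\prec_2$. A BP-embedding of $G$ is an embedding of $G$ into a closed rectangle $R=[a,b]\times[c,d]\subset\mathbb{R}^2$ (vertices to distinct points, edges to simple arcs meeting only at common endpoints) such that all sources lie on the top side $y=d$, all sinks on the bottom side $y=c$, and everything else lies in the interior of $R$. It is upward if the $y$-coordinate strictly decreases along every edge from its initial to its terminal vertex. $G$ is elementary if each connected component has at most one internal vertex. Canonical order for elementary $G$ with upward BP-embedding $\phi$: each component is a single edge or a star with one internal vertex $v$ (edges $I(v)\cup O(v)$); $\prec_\phi$ lists the components from left to right, and within a star lists the edges of $I(v)$ from left to right followed by the edges of $O(v)$ from left to right. Layer decomposition of an arbitrary upward BP-embedding $\phi$ of $G$: choose heights $d=y_0>y_1>\cdots>y_n=c$ with no vertex on the lines $y=y_j$ ($0<j<n$) and at most one internal vertex in each strip $y_{j-1}\ge y\ge y_j$; cutting every edge at its crossings with these lines (adding boundary vertices there) exhibits $\phi$ as a vertical stack of elementary upward BP-embeddings $\phi_1$ (top) ,\dots,$\phi_n$ (bottom) of elementary progressive graphs $G_1,\dots,G_n$ with $G=G_n\circ\cdots\circ G_1$ (outputs of $G_j$ matched left to right with inputs of $G_{j+1}$). Then $\prec_\phi:=\prec_{\phi_n}\circ\cdots\circ\prec_{\phi_1}$,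 viewed as an order on $E(G)$. *)

theory Defs
  imports "HOL-Analysis.Analysis"
begin

section \<open>Progressive graphs\<close>

record ('v, 'e) pgraph =
  verts :: "'v set"
  edges :: "'e set"
  src :: "'e \<Rightarrow> 'v"
  tgt :: "'e \<Rightarrow> 'v"

definition indeg :: "('v, 'e) pgraph \<Rightarrow> 'v \<Rightarrow> nat" where
  "indeg G v = card {e \<in> edges G. tgt G e = v}"

definition outdeg :: "('v, 'e) pgraph \<Rightarrow> 'v \<Rightarrow> nat" where
  "outdeg G v = card {e \<in> edges G. src G e = v}"

definition degree :: "('v, 'e) pgraph \<Rightarrow> 'v \<Rightarrow> nat" where
  "degree G v = indeg G v + outdeg G v"

definition is_source :: "('v, 'e) pgraph \<Rightarrow> 'v \<Rightarrow> bool" where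
  "is_source G v \<longleftrightarrow> v \<in> verts G \<and> indeg G v = 0"

definition is_sink :: "('v, 'e) pgraph \<Rightarrow> 'v \<Rightarrow> bool" where
  "is_sink G v \<longleftrightarrow> v \<in> verts G \<and> outdeg G v = 0"

definition internal :: "('v, 'e) pgraph \<Rightarrow> 'v \<Rightarrow> bool" where
  "internal G v \<longleftrightarrow> v \<in> verts G \<and> degree G v \<noteq> 1"

definition is_epath :: "('v, 'e) pgraph \<Rightarrow> 'e list \<Rightarrow> bool" where
  "is_epath G es \<longleftrightarrow> es \<noteq> [] \<and> set es \<subseteq> edges G \<and>
     (\<forall>i. Suc i < length es \<longrightarrow> tgt G (es ! i) = src G (es ! Suc i))"

definition acyclic_pg :: "('v, 'e) pgraph \<Rightarrow> bool" where
  "acyclic_pg G \<longleftrightarrow> \<not> (\<exists>es. is_epath G es \<and> tgt G (last es) = src G (hd es))"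

definition progressive_graph :: "('v, 'e) pgraph \<Rightarrow> bool" where
  "progressive_graph G \<longleftrightarrow>
     finite (verts G) \<and> finite (edges G) \<and>
     (\<forall>e \<in> edges G. src G e \<in> verts G \<and> tgt G e \<in> verts G) \<and>
     acyclic_pg G \<and>
     (\<forall>v. is_source G v \<longrightarrow> degree G v = 1) \<and>
     (\<forall>v. is_sink G v \<longrightarrow> degree G v = 1)"

definition edge_reach :: "('v, 'e) pgraph \<Rightarrow> 'e \<Rightarrow> 'e \<Rightarrow> bool" where
  "edge_reach G e e' \<longleftrightarrow> e \<noteq> e' \<and>
     (\<exists>es. is_epath G es \<and> hd es = e \<and> last es = e')"

section \<open>Planar orders (linear orders on a finite set represented as enumerating lists)\<close>

definition list_prec :: "'e list \<Rightarrow> 'e \<Rightarrow> 'e \<Rightarrow> bool" where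
  "list_prec L x y \<longleftrightarrow> (\<exists>i k. i < k \<and> k < length L \<and> L ! i = x \<and> L ! k = y)"

definition planar_order :: "('v, 'e) pgraph \<Rightarrow> 'e list \<Rightarrow> bool" where
  "planar_order G L \<longleftrightarrow>
     distinct L \<and> set L = edges G \<and>
     (\<forall>e1 e2. edge_reach G e1 e2 \<longrightarrow> list_prec L e1 e2) \<and>
     (\<forall>e1 e2 e3. list_prec L e1 e2 \<and> list_prec L e2 e3 \<and> edge_reach G e1 e3 \<longrightarrow>
        edge_reach G e1 e2 \<or> edge_reach G e2 e3)"

section \<open>Upward BP-embeddings\<close>

text \<open>Points of the plane are pairs (x, y). Vertices are placed by pV, edge e is
  drawn as the path pE e on [0,1] from its initial to its terminal vertex.
  The rectangle is [a,b] x [c,d].\<close>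
definition BP_embedding ::
  "('v, 'e) pgraph \<Rightarrow> ('v \<Rightarrow> real \<times> real) \<Rightarrow> ('e \<Rightarrow> real \<Rightarrow> real \<times> real)
    \<Rightarrow> real \<Rightarrow> real \<Rightarrow> real \<Rightarrow> real \<Rightarrow> bool" where
  "BP_embedding G pV pE a b c d \<longleftrightarrow>
     a < b \<and> c < d \<and>
     inj_on pV (verts G) \<and>
     (\<forall>e \<in> edges G. arc (pE e) \<and> pathstart (pE e) = pV (src G e) \<and>
                     pathfinish (pE e) = pV (tgt G e)) \<and>
     (\<forall>e \<in> edges G. \<forall>e' \<in> edges G. e \<noteq> e' \<longrightarrow>
        path_image (pE e) \<inter> path_image (pE e') \<subseteq>
          pV ` ({src G e, tgt G e} \<inter> {src G e', tgt G e'})) \<and>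
     (\<forall>e \<in> edges G. \<forall>v \<in> verts G. pV v \<in> path_image (pE e) \<longrightarrow>
        v = src G e \<or> v = tgt G e) \<and>
     (\<forall>v. is_source G v \<longrightarrow> snd (pV v) = d \<and> a \<le> fst (pV v) \<and> fst (pV v) \<le> b) \<and>
     (\<forall>v. is_sink G v \<longrightarrow> snd (pV v) = c \<and> a \<le> fst (pV v) \<and> fst (pV v) \<le> b) \<and>
     (\<forall>v. internal G v \<longrightarrow>
        a < fst (pV v) \<and> fst (pV v) < b \<and> c < snd (pV v) \<and> snd (pV v) < d) \<and>
     (\<forall>e \<in> edges G. \<forall>\<tau> \<in> {0<..<1}.
        a < fst (pE e \<tau>) \<and> fst (pE e \<tau>) < b \<and> c < snd (pE e \<tau>) \<and> snd (pE e \<tau>) < d)"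

definition upward_BP_embedding ::
  "('v, 'e) pgraph \<Rightarrow> ('v \<Rightarrow> real \<times> real) \<Rightarrow> ('e \<Rightarrow> real \<Rightarrow> real \<times> real)
    \<Rightarrow> real \<Rightarrow> real \<Rightarrow> real \<Rightarrow> real \<Rightarrow> bool" where
  "upward_BP_embedding G pV pE a b c d \<longleftrightarrow>
     BP_embedding G pV pE a b c d \<and>
     (\<forall>e \<in> edges G. \<forall>\<tau>1 \<tau>2. 0 \<le> \<tau>1 \<and> \<tau>1 < \<tau>2 \<and> \<tau>2 \<le> 1 \<longrightarrow>
        snd (pE e \<tau>2) < snd (pE e \<tau>1))"

section \<open>Layer decompositions\<close>

definition strip_internal ::
  "('v, 'e) pgraph \<Rightarrow> ('v \<Rightarrow> real \<times> real) \<Rightarrow> (nat \<Rightarrow> real) \<Rightarrow> nat \<Rightarrow> 'v set" where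
  "strip_internal G pV ys j =
     {v \<in> verts G. internal G v \<and> ys j \<le> snd (pV v) \<and> snd (pV v) \<le> ys (j - 1)}"

definition layer_decomposition ::
  "('v, 'e) pgraph \<Rightarrow> ('v \<Rightarrow> real \<times> real) \<Rightarrow> real \<Rightarrow> real \<Rightarrow> (nat \<Rightarrow> real) \<Rightarrow> nat \<Rightarrow> bool" where
  "layer_decomposition G pV c d ys n \<longleftrightarrow>
     ys 0 = d \<and> ys n = c \<and> (\<forall>j < n. ys (Suc j) < ys j) \<and>
     (\<forall>j. 0 < j \<and> j < n \<longrightarrow> (\<forall>v \<in> verts G. snd (pV v) \<noteq> ys j)) \<and>
     (\<forall>j \<in> {1..n}. card (strip_internal G pV ys j) \<le> 1)"

text \<open>Edges of G having a piece in strip j; the piece of e in strip j is an edge of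
  the layer graph G_j, identified with e.\<close>
definition layer_edges ::
  "('v, 'e) pgraph \<Rightarrow> ('v \<Rightarrow> real \<times> real) \<Rightarrow> (nat \<Rightarrow> real) \<Rightarrow> nat \<Rightarrow> 'e set" where
  "layer_edges G pV ys j =
     {e \<in> edges G. snd (pV (tgt G e)) < ys (j - 1) \<and> ys j < snd (pV (src G e))}"

definition layer_in ::
  "('v, 'e) pgraph \<Rightarrow> ('v \<Rightarrow> real \<times> real) \<Rightarrow> (nat \<Rightarrow> real) \<Rightarrow> nat \<Rightarrow> 'e \<Rightarrow> bool" where
  "layer_in G pV ys j e \<longleftrightarrow>
     e \<in> layer_edges G pV ys j \<and> src G e \<notin> strip_internal G pV ys j"

definition layer_out ::
  "('v, 'e) pgraph \<Rightarrow> ('v \<Rightarrow> real \<times> real) \<Rightarrow> (nat \<Rightarrow> real) \<Rightarrow> nat \<Rightarrow> 'e \<Rightarrow> bool" where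
  "layer_out G pV ys j e \<longleftrightarrow>
     e \<in> layer_edges G pV ys j \<and> tgt G e \<notin> strip_internal G pV ys j"

definition xat :: "('e \<Rightarrow> real \<Rightarrow> real \<times> real) \<Rightarrow> 'e \<Rightarrow> real \<Rightarrow> real" where
  "xat pE e h = fst (pE e (THE \<tau>. \<tau> \<in> {0..1} \<and> snd (pE e \<tau>) = h))"

text \<open>Height at which components of strip j are compared left to right:
  the height of the internal vertex if there is one, else the top line.\<close>
definition layer_height ::
  "('v, 'e) pgraph \<Rightarrow> ('v \<Rightarrow> real \<times> real) \<Rightarrow> (nat \<Rightarrow> real) \<Rightarrow> nat \<Rightarrow> real" where
  "layer_height G pV ys j =
     (if strip_internal G pV ys j = {} then ys (j - 1)
      else snd (pV (THE v. v \<in> strip_internal G pV ys j)))"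

text \<open>Sort key of the canonical order of the elementary layer G_j:
  (horizontal position of the component, 0 for I(v) / 1 for O(v),
   horizontal position inside the star).\<close>
definition canon_key ::
  "('v, 'e) pgraph \<Rightarrow> ('v \<Rightarrow> real \<times> real) \<Rightarrow> ('e \<Rightarrow> real \<Rightarrow> real \<times> real)
    \<Rightarrow> (nat \<Rightarrow> real) \<Rightarrow> nat \<Rightarrow> 'e \<Rightarrow> real \<times> nat \<times> real" where
  "canon_key G pV pE ys j e =
     (if tgt G e \<in> strip_internal G pV ys j
      then (fst (pV (tgt G e)), 0, xat pE e (ys (j - 1)))
      else if src G e \<in> strip_internal G pV ys j
      then (fst (pV (src G e)), 1, xat pE e (ys j))
      else (xat pE e (layer_height G pV ys j), 0, 0))"

definition lex_less :: "real \<times> nat \<times> real \<Rightarrow> real \<times> nat \<times> real \<Rightarrow> bool" where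
  "lex_less k1 k2 \<longleftrightarrow>
     (case k1 of (x1, r1, z1) \<Rightarrow> case k2 of (x2, r2, z2) \<Rightarrow>
        x1 < x2 \<or> (x1 = x2 \<and> (r1 < r2 \<or> (r1 = r2 \<and> z1 < z2))))"

definition canonical_layer_order ::
  "('v, 'e) pgraph \<Rightarrow> ('v \<Rightarrow> real \<times> real) \<Rightarrow> ('e \<Rightarrow> real \<Rightarrow> real \<times> real)
    \<Rightarrow> (nat \<Rightarrow> real) \<Rightarrow> nat \<Rightarrow> 'e list \<Rightarrow> bool" where
  "canonical_layer_order G pV pE ys j L \<longleftrightarrow>
     distinct L \<and> set L = layer_edges G pV ys j \<and>
     sorted_wrt (\<lambda>e f. lex_less (canon_key G pV pE ys j e) (canon_key G pV pE ys j f)) L"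

section \<open>Composition of orders\<close>

text \<open>Input edges i_k of the second graph, each with the block P_k following it.\<close>
fun blocks :: "('e \<Rightarrow> bool) \<Rightarrow> 'e list \<Rightarrow> ('e \<times> 'e list) list" where
  "blocks P [] = []"
| "blocks P (x # xs) =
     (if P x then (x, takeWhile (\<lambda>y. \<not> P y) xs) # blocks P xs else blocks P xs)"

text \<open>Composite edges are pairs (name as edge of G, name of its last piece).
  The k-th output o_k of the first order is merged with the k-th input i_k of the
  second into a new edge, followed by the block P_k.\<close>
fun comp_list :: "('e \<Rightarrow> bool) \<Rightarrow> ('e \<times> 'e) list \<Rightarrow> ('e \<times> 'e list) list \<Rightarrow> ('e \<times> 'e) list" where
  "comp_list Out [] bs = []"
| "comp_list Out (p # ps) bs =
     (if Out (snd p) then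
        (case bs of
           [] \<Rightarrow> p # comp_list Out ps []
         | (i, Pk) # bs' \<Rightarrow> (fst p, i) # map (\<lambda>e. (e, e)) Pk @ comp_list Out ps bs')
      else p # comp_list Out ps bs)"

primrec comp_upto ::
  "(nat \<Rightarrow> 'e list) \<Rightarrow> (nat \<Rightarrow> 'e \<Rightarrow> bool) \<Rightarrow> (nat \<Rightarrow> 'e \<Rightarrow> bool) \<Rightarrow> nat \<Rightarrow> ('e \<times> 'e) list" where
  "comp_upto Ls In Out 0 = []"
| "comp_upto Ls In Out (Suc j) =
     (if j = 0 then map (\<lambda>e. (e, e)) (Ls 1)
      else comp_list (Out j) (comp_upto Ls In Out j) (blocks (In (Suc j)) (Ls (Suc j))))"

definition phi_order ::
  "('v, 'e) pgraph \<Rightarrow> ('v \<Rightarrow> real \<times> real) \<Rightarrow> (nat \<Rightarrow> real) \<Rightarrow> (nat \<Rightarrow> 'e list) \<Rightarrow> nat \<Rightarrow> 'e list" where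
  "phi_order G pV ys Ls n =
     map fst (comp_upto Ls (layer_in G pV ys) (layer_out G pV ys) n)"

end

theory Submission
  imports Defs
begin

text \<open>Cutting the embedding along the lines \<open>y = ys j\<close>, the order \<open>\<prec>\<^sub>\<phi>\<close> is built layer by
  layer. After \<open>j\<close> layers it is a planar order on the edges starting above the line \<open>y = ys j\<close>
  in which the edges crossing that line appear from left to right. A layer without internal vertex
  changes nothing. If the layer contains an internal vertex \<open>v\<close>, composition inserts the out-edges
  of \<open>v\<close> right after the last in-edge of \<open>v\<close>; the in-edges of \<open>v\<close> are consecutive among the
  crossing edges, and every edge crosses the line or reaches a crossing edge, which is exactly what
  keeps the order planar. That the canonical keys list crossing edges from left to right follows
  from the fact that two arcs which do not meet inside a strip keep their horizontal order
  (intermediate value theorem).\<close>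

lemma list_prec_iff_append: "list_prec L x y \<longleftrightarrow> (\<exists>us vs ws. L = us @ x # vs @ y # ws)"
proof
  assume "list_prec L x y"
  then obtain i k where ik: "i < k" "k < length L" "L ! i = x" "L ! k = y"
    unfolding list_prec_def by auto
  have "L = take i L @ L ! i # drop (Suc i) L"
    using id_take_nth_drop[of i L] ik by simp
  moreover have "drop (Suc i) L = take (k - Suc i) (drop (Suc i) L) @ L ! k # drop (Suc k) L"
    using ik Cons_nth_drop_Suc[of k L] append_take_drop_id[of "k - Suc i" "drop (Suc i) L"] by simp
  ultimately show "\<exists>us vs ws. L = us @ x # vs @ y # ws" using ik by metis
next
  assume "\<exists>us vs ws. L = us @ x # vs @ y # ws"
  then obtain us vs ws where L: "L = us @ x # vs @ y # ws" by blast
  show "list_prec L x y" unfolding list_prec_def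
    by (rule exI[of _ "length us"], rule exI[of _ "length us + Suc (length vs)"])
       (auto simp: L nth_append)
qed

lemma list_prec_in_set: "list_prec L x y \<Longrightarrow> x \<in> set L \<and> y \<in> set L"
  unfolding list_prec_def by auto

lemma list_prec_append: "x \<in> set X \<Longrightarrow> y \<in> set Y \<Longrightarrow> list_prec (X @ Y) x y"
proof -
  assume "x \<in> set X" "y \<in> set Y"
  then obtain a b c d where "X = a @ x # b" "Y = c @ y # d" by (metis split_list)
  then show ?thesis
    unfolding list_prec_iff_append by (rule_tac x=a in exI, rule_tac x="b @ c" in exI) auto
qed

lemma list_prec_asym: "distinct L \<Longrightarrow> list_prec L x y \<Longrightarrow> \<not> list_prec L y x"
  unfolding list_prec_def by (auto simp: nth_eq_iff_index_eq)

lemma list_prec_irrefl: "distinct L \<Longrightarrow> \<not> list_prec L x x"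
  unfolding list_prec_def by (auto simp: nth_eq_iff_index_eq)

lemma list_prec_total:
  "distinct L \<Longrightarrow> x \<in> set L \<Longrightarrow> y \<in> set L \<Longrightarrow> x \<noteq> y \<Longrightarrow> list_prec L x y \<or> list_prec L y x"
  unfolding list_prec_def in_set_conv_nth by (metis linorder_neqE_nat)

lemma list_prec_trans:
  assumes "distinct L" "list_prec L x y" "list_prec L y z"
  shows "list_prec L x z"
proof -
  obtain i k where 1: "i < k" "k < length L" "L ! i = x" "L ! k = y"
    using assms(2) unfolding list_prec_def by auto
  obtain k' l where 2: "k' < l" "l < length L" "L ! k' = y" "L ! l = z"
    using assms(3) unfolding list_prec_def by auto
  have "k = k'" using nth_eq_iff_index_eq[OF assms(1), of k k'] 1 2 by auto
  then show ?thesis unfolding list_prec_def using 1 2 by (intro exI[of _ i] exI[of _ l]) auto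
qed

lemma list_prec_filter:
  assumes "distinct L"
  shows "list_prec (filter P L) x y \<longleftrightarrow> list_prec L x y \<and> P x \<and> P y"
proof
  assume p: "list_prec (filter P L) x y"
  then have m: "x \<in> set L" "y \<in> set L" "P x" "P y" using list_prec_in_set[OF p] by auto
  have df: "distinct (filter P L)" using assms by simp
  have "\<not> list_prec L y x"
  proof
    assume "list_prec L y x"
    then have "list_prec (filter P L) y x" using m unfolding list_prec_iff_append by force
    then show False using p list_prec_asym[OF df] by blast
  qed
  moreover have "x \<noteq> y" using p list_prec_irrefl[OF df] by auto
  ultimately show "list_prec L x y \<and> P x \<and> P y" using list_prec_total[OF assms m(1,2)] m by auto
next
  assume "list_prec L x y \<and> P x \<and> P y"
  then show "list_prec (filter P L) x y" unfolding list_prec_iff_append by force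
qed

lemma sorted_wrt_key_unique:
  fixes g :: "'a \<Rightarrow> 'b :: linorder"
  assumes "sorted_wrt (\<lambda>e f. g e < g f) xs" "sorted_wrt (\<lambda>e f. g e < g f) ys" "set xs = set ys"
  shows "xs = ys"
proof -
  have s: "sorted_wrt (<) (map g xs)" "sorted_wrt (<) (map g ys)"
    using assms by (auto simp: sorted_wrt_map)
  then have "map g xs = map g ys" using strict_sorted_equal[OF s] assms(3) by simp
  moreover have "inj_on g (set xs \<union> set ys)"
    using s strict_sorted_iff distinct_map[of g xs] assms(3) by auto
  ultimately show ?thesis using inj_on_map_eq_map by blast
qed

lemma sorted_key_split:
  "sorted (map \<rho> xs) \<Longrightarrow> xs = filter (\<lambda>x. \<rho> x < t) xs @ filter (\<lambda>x. t \<le> \<rho> x) xs"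
proof (induction xs)
  case (Cons x xs)
  show ?case
  proof (cases "\<rho> x < t")
    case False
    then have "\<forall>y\<in>set xs. t \<le> \<rho> y" using Cons.prems by auto
    then show ?thesis using False by (auto simp: filter_empty_conv filter_id_conv not_less)
  qed (use Cons in auto)
qed simp

lemma sorted_key_blocks:
  fixes \<rho> :: "'a \<Rightarrow> nat"
  assumes "sorted (map \<rho> xs)" "\<forall>x\<in>set xs. \<rho> x < m"
  shows "xs = concat (map (\<lambda>i. filter (\<lambda>x. \<rho> x = i) xs) [0..<m])"
  using assms
proof (induction m arbitrary: xs)
  case (Suc m)
  let ?low = "filter (\<lambda>x. \<rho> x < m) xs"
  have "xs = ?low @ filter (\<lambda>x. m \<le> \<rho> x) xs"
    by (rule sorted_key_split[OF Suc.prems(1)])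
  also have "filter (\<lambda>x. m \<le> \<rho> x) xs = filter (\<lambda>x. \<rho> x = m) xs"
    using Suc.prems(2) by (intro filter_cong) auto
  also have "?low = concat (map (\<lambda>i. filter (\<lambda>x. \<rho> x = i) ?low) [0..<m])"
    by (rule Suc.IH) (use Suc.prems(1) in \<open>simp_all add: sorted_filter\<close>)
  also have "map (\<lambda>i. filter (\<lambda>x. \<rho> x = i) ?low) [0..<m] = map (\<lambda>i. filter (\<lambda>x. \<rho> x = i) xs) [0..<m]"
    by (intro map_cong refl) (auto simp: filter_filter intro: filter_cong)
  finally show ?case by simp
qed simp

text \<open>On orders whose composite edges are all of the form \<open>(e, e)\<close>, composition with the
  blocks of the next layer is the following list expansion: after the \<open>k\<close>-th output edge
  the block \<open>P\<^sub>k\<close> following the \<open>k\<close>-th input edge is inserted.\<close>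

fun expand :: "('e \<Rightarrow> bool) \<Rightarrow> 'e list \<Rightarrow> ('e \<times> 'e list) list \<Rightarrow> 'e list" where
  "expand Out [] bs = []"
| "expand Out (x # xs) bs =
     (if Out x then (case bs of [] \<Rightarrow> x # expand Out xs [] | (i, P) # bs' \<Rightarrow> x # P @ expand Out xs bs')
      else x # expand Out xs bs)"

lemma comp_list_diag:
  "filter Out L = map fst bs \<Longrightarrow> comp_list Out (map (\<lambda>e. (e, e)) L) bs = map (\<lambda>e. (e, e)) (expand Out L bs)"
proof (induction L arbitrary: bs)
  case (Cons x xs)
  show ?case
  proof (cases "Out x")
    case True
    then obtain P bs' where "bs = (x, P) # bs'" "filter Out xs = map fst bs'"
      using Cons.prems by (cases bs) auto
    then show ?thesis using Cons.IH True by simp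
  qed (use Cons in simp)
qed simp

lemma expand_append:
  "filter Out L1 = map fst bs1 \<Longrightarrow> expand Out (L1 @ L2) (bs1 @ bs2) = expand Out L1 bs1 @ expand Out L2 bs2"
proof (induction L1 arbitrary: bs1)
  case (Cons x xs)
  show ?case
  proof (cases "Out x")
    case True
    then obtain P bs' where "bs1 = (x, P) # bs'" "filter Out xs = map fst bs'"
      using Cons.prems by (cases bs1) auto
    then show ?thesis using Cons.IH True by simp
  qed (use Cons in simp)
qed simp

lemma expand_empty_blocks: "filter Out L = xs \<Longrightarrow> expand Out L (map (\<lambda>x. (x, [])) xs) = L"
  by (induction L arbitrary: xs) auto

lemma map_fst_blocks: "map fst (blocks P M) = filter P M"
  by (induction M) auto

lemma blocks_skip: "\<forall>x\<in>set N. \<not> P x \<Longrightarrow> blocks P (N @ Z) = blocks P Z"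
  by (induction N) auto

lemma takeWhile_skip: "\<forall>x\<in>set N. \<not> P x \<Longrightarrow> (Z = [] \<or> P (hd Z)) \<Longrightarrow> takeWhile (\<lambda>y. \<not> P y) (N @ Z) = N"
  by (induction N) (cases Z; auto)+

lemma blocks_all: "\<forall>x\<in>set X. P x \<Longrightarrow> (Z = [] \<or> P (hd Z)) \<Longrightarrow> blocks P (X @ Z) = map (\<lambda>x. (x, [])) X @ blocks P Z"
proof (induction X)
  case (Cons x X)
  have "takeWhile (\<lambda>y. \<not> P y) (X @ Z) = []" using Cons.prems by (cases X; cases Z) auto
  then show ?case using Cons by simp
qed simp

lemma blocks_one_block:
  assumes "\<forall>x\<in>set X. P x" "P r" "\<forall>x\<in>set N. \<not> P x" "\<forall>x\<in>set Y. P x"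
  shows "blocks P (X @ r # N @ Y) = map (\<lambda>x. (x, [])) X @ (r, N) # map (\<lambda>x. (x, [])) Y"
proof -
  have hY: "Y = [] \<or> P (hd Y)" using assms(4) by (cases Y) auto
  have "blocks P (r # N @ Y) = (r, N) # blocks P Y"
    using takeWhile_skip[OF assms(3) hY] blocks_skip[OF assms(3)] assms(2) by simp
  moreover have "blocks P Y = map (\<lambda>x. (x, [])) Y" using blocks_all[OF assms(4), of "[]"] by simp
  ultimately show ?thesis using blocks_all[OF assms(1)] assms(2) by auto
qed

lemma expand_filter_blocks: "M = [] \<or> P (hd M) \<Longrightarrow> expand P (filter P M) (blocks P M) = M"
proof (induction M rule: length_induct)
  case (1 M)
  show ?case
  proof (cases M)
    case (Cons x xs)
    let ?T = "takeWhile (\<lambda>y. \<not> P y) xs" and ?D = "dropWhile (\<lambda>y. \<not> P y) xs"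
    have x: "P x" using "1.prems" Cons by simp
    have T: "\<forall>y\<in>set ?T. \<not> P y" by (auto dest: set_takeWhileD)
    have split: "?T @ ?D = xs" by (rule takeWhile_dropWhile_id)
    have "?D = [] \<or> P (hd ?D)" using hd_dropWhile by blast
    moreover have "length ?D < length M" using Cons by (simp add: le_imp_less_Suc length_dropWhile_le)
    ultimately have IH: "expand P (filter P ?D) (blocks P ?D) = ?D" using "1.IH" by blast
    have "blocks P xs = blocks P ?D" using blocks_skip[OF T, of ?D] split by simp
    moreover have "filter P xs = filter P ?D"
      using T filter_append[of P ?T ?D] split by (simp add: filter_empty_conv)
    ultimately show ?thesis using Cons x IH split by simp
  qed simp
qed

section \<open>Planarity of a list relative to a reachability relation\<close>

definition planar_wrt :: "('e \<Rightarrow> 'e \<Rightarrow> bool) \<Rightarrow> 'e list \<Rightarrow> bool" where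
  "planar_wrt R L \<longleftrightarrow>
     (\<forall>x z. R x z \<longrightarrow> x \<in> set L \<longrightarrow> z \<in> set L \<longrightarrow> list_prec L x z) \<and>
     (\<forall>x y z. list_prec L x y \<and> list_prec L y z \<and> R x z \<longrightarrow> R x y \<or> R y z)"

text \<open>Inserting the out-edges \<open>N\<close> of a vertex right after \<open>r\<close>, the last of its in-edges
  \<open>Ins\<close>, into a planar list; \<open>C\<close> plays the role of the edges crossing the current line.\<close>

locale planar_insertion =
  fixes R :: "'e \<Rightarrow> 'e \<Rightarrow> bool"
    and A B N :: "'e list"
    and r :: 'e
    and Ins C :: "'e set"
  assumes distinct_new: "distinct (A @ r # N @ B)"
    and planar_old: "planar_wrt R (A @ r # B)"
    and Ins_sub_C: "Ins \<subseteq> C" and C_sub: "C \<subseteq> set (A @ r # B)" and r_in_Ins: "r \<in> Ins"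
    and Ins_interval: "\<And>u w. u \<in> C \<Longrightarrow> w \<in> Ins \<Longrightarrow> list_prec (A @ r # B) w u \<Longrightarrow>
                              list_prec (A @ r # B) u r \<Longrightarrow> u \<in> Ins"
    and Ins_before_r: "\<And>w. w \<in> Ins \<Longrightarrow> w = r \<or> list_prec (A @ r # B) w r"
    and C_maximal: "\<And>u z. u \<in> C \<Longrightarrow> z \<in> set (A @ r # B) \<Longrightarrow> \<not> R u z"
    and reaches_C: "\<And>y. y \<in> set (A @ r # B) \<Longrightarrow> y \<in> C \<or> (\<exists>u\<in>C. R y u)"
    and N_maximal: "\<And>x z. x \<in> set N \<Longrightarrow> z \<in> set (A @ r # N @ B) \<Longrightarrow> \<not> R x z"
    and reach_N_iff: "\<And>x z. x \<in> set (A @ r # B) \<Longrightarrow> z \<in> set N \<Longrightarrow>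
                              R x z \<longleftrightarrow> x \<in> Ins \<or> (\<exists>w\<in>Ins. R x w)"
begin

abbreviation (input) old where "old \<equiv> A @ r # B"
abbreviation (input) new where "new \<equiv> A @ r # N @ B"

lemma distinct_old: "distinct old"
  using distinct_new by auto

lemma set_new: "set new = set old \<union> set N"
  by auto

lemma old_disjoint_N: "set old \<inter> set N = {}"
  using distinct_new by auto

lemma old_prec: "R x z \<Longrightarrow> x \<in> set old \<Longrightarrow> z \<in> set old \<Longrightarrow> list_prec old x z"
  and old_planar: "list_prec old x y \<Longrightarrow> list_prec old y z \<Longrightarrow> R x z \<Longrightarrow> R x y \<or> R y z"
  using planar_old unfolding planar_wrt_def by blast+

lemma prec_new_old: "x \<in> set old \<Longrightarrow> y \<in> set old \<Longrightarrow> list_prec new x y \<longleftrightarrow> list_prec old x y"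
proof -
  have "filter (\<lambda>e. e \<notin> set N) A = A" "filter (\<lambda>e. e \<notin> set N) B = B"
    using distinct_new by (auto simp: filter_id_conv)
  then have "filter (\<lambda>e. e \<notin> set N) new = old"
    using distinct_new by (simp add: filter_empty_conv)
  then show "x \<in> set old \<Longrightarrow> y \<in> set old \<Longrightarrow> ?thesis"
    using list_prec_filter[OF distinct_new, of "\<lambda>e. e \<notin> set N" x y] old_disjoint_N by auto
qed

lemma prec_old_r: "x \<in> set old \<Longrightarrow> list_prec old x r \<longleftrightarrow> x \<in> set A"
proof
  assume x: "x \<in> set old" and xr: "list_prec old x r"
  show "x \<in> set A"
  proof (rule ccontr)
    assume "x \<notin> set A"
    moreover have "x \<noteq> r" using xr list_prec_irrefl[OF distinct_old] by auto
    ultimately have "list_prec old r x" using x list_prec_append[of r "A @ [r]" x B] by auto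
    then show False using xr list_prec_asym[OF distinct_old] by auto
  qed
qed (use list_prec_append[of _ A r "r # B"] in auto)

lemma prec_new_before_N:
  assumes x: "x \<in> set old" and z: "z \<in> set N"
  shows "list_prec new x z \<longleftrightarrow> x = r \<or> list_prec old x r"
proof
  assume xz: "list_prec new x z"
  show "x = r \<or> list_prec old x r"
  proof (rule ccontr)
    assume "\<not> (x = r \<or> list_prec old x r)"
    then have "x \<in> set B" using prec_old_r x by auto
    then have "list_prec new z x" using list_prec_append[of z "A @ r # N" x B] z by auto
    then show False using xz list_prec_asym[OF distinct_new] by auto
  qed
next
  assume "x = r \<or> list_prec old x r"
  then have "x \<in> set (A @ [r])" using prec_old_r x by auto
  then show "list_prec new x z" using list_prec_append[of x "A @ [r]" z "N @ B"] z by auto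
qed

lemma prec_new_after_N:
  assumes y: "y \<in> set old" and z: "z \<in> set N"
  shows "list_prec new z y \<longleftrightarrow> list_prec old r y"
proof -
  have "y \<noteq> z" using y z old_disjoint_N by auto
  then have "list_prec new z y \<longleftrightarrow> \<not> list_prec new y z"
    using list_prec_total[OF distinct_new, of y z] list_prec_asym[OF distinct_new, of y z] y z by auto
  also have "\<dots> \<longleftrightarrow> \<not> (y = r \<or> list_prec old y r)" using prec_new_before_N y z by auto
  also have "\<dots> \<longleftrightarrow> list_prec old r y"
    using list_prec_total[OF distinct_old, of y r] list_prec_asym[OF distinct_old, of r y]
      list_prec_irrefl[OF distinct_old] y by auto
  finally show ?thesis .
qed

lemma reach_Ins_before_r:
  assumes x: "x \<in> set old" and reach: "x \<in> Ins \<or> (\<exists>w\<in>Ins. R x w)"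
  shows "x = r \<or> list_prec old x r"
  using reach
proof
  assume "\<exists>w\<in>Ins. R x w"
  then obtain w where w: "w \<in> Ins" "R x w" by blast
  then have "list_prec old x w" using old_prec x Ins_sub_C C_sub by auto
  then show ?thesis using Ins_before_r[OF w(1)] list_prec_trans[OF distinct_old] by auto
qed (use Ins_before_r in auto)

lemma planar_new_prec: "R x z \<Longrightarrow> x \<in> set new \<Longrightarrow> z \<in> set new \<Longrightarrow> list_prec new x z"
  using N_maximal old_prec prec_new_old reach_N_iff prec_new_before_N reach_Ins_before_r
  unfolding set_new by blast

text \<open>The only delicate case of the second planarity condition: \<open>x \<prec> y\<close> in the old list and
  \<open>z\<close> new. If \<open>y\<close> does not reach \<open>Ins\<close> but lies before \<open>r\<close>, then \<open>y\<close> reaches a cut edge \<open>u\<close>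
  which is trapped between a reachable in-edge and \<open>r\<close>, hence lies in \<open>Ins\<close> after all.\<close>

lemma planar_new_last_in_N:
  assumes x: "x \<in> set old" and y: "y \<in> set old" and z: "z \<in> set N"
    and xy: "list_prec new x y" and yz: "list_prec new y z" and xz: "R x z"
  shows "R x y \<or> R y z"
proof (rule ccontr)
  assume nR: "\<not> (R x y \<or> R y z)"
  obtain w0 where w0: "w0 \<in> Ins" "x = w0 \<or> R x w0" using reach_N_iff x z xz by blast
  have nyI: "y \<notin> Ins" "\<not> (\<exists>w\<in>Ins. R y w)" using reach_N_iff y z nR by auto
  have yr: "list_prec old y r" using prec_new_before_N y z yz nyI r_in_Ins by auto
  have xy': "list_prec old x y" using prec_new_old x y xy by auto
  have "\<not> list_prec old y w0"
  proof
    assume yw: "list_prec old y w0"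
    from w0(2) show False
      using xy' yw list_prec_asym[OF distinct_old] old_planar[OF xy' yw] nR nyI w0(1) by auto
  qed
  moreover have "y \<noteq> w0" using nyI w0 by auto
  ultimately have w0y: "list_prec old w0 y"
    using list_prec_total[OF distinct_old, of y w0] Ins_sub_C C_sub w0 y by auto
  from reaches_C[OF y] show False
  proof
    assume "y \<in> C" then show False using Ins_interval w0y yr w0 nyI by blast
  next
    assume "\<exists>u\<in>C. R y u"
    then obtain u where u: "u \<in> C" "R y u" by blast
    have uI: "u \<notin> Ins" using u nyI by auto
    have yu: "list_prec old y u" using old_prec u y C_sub by auto
    have "\<not> list_prec old r u"
      using old_planar[OF yr _ u(2)] nyI r_in_Ins C_maximal Ins_sub_C C_sub u(1) by blast
    moreover have "u \<noteq> r" using uI r_in_Ins by auto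
    ultimately have "list_prec old u r"
      using list_prec_total[OF distinct_old, of u r] C_sub u by auto
    moreover have "list_prec old w0 u" using list_prec_trans[OF distinct_old w0y yu] .
    ultimately show False using Ins_interval u w0 uI by blast
  qed
qed

lemma planar_new: "planar_wrt R new"
  unfolding planar_wrt_def
proof (intro conjI allI impI)
  fix x y z assume a: "list_prec new x y \<and> list_prec new y z \<and> R x z"
  then have xyz: "x \<in> set new" "y \<in> set new" "z \<in> set new"
    using list_prec_in_set[of new x y] list_prec_in_set[of new y z] by auto
  have x: "x \<in> set old" using N_maximal a xyz set_new by blast
  consider "y \<in> set N" | "y \<in> set old" "z \<in> set N" | "y \<in> set old" "z \<in> set old"
    using xyz set_new by blast
  then show "R x y \<or> R y z"
  proof cases
    case 1
    have "x \<in> Ins \<or> (\<exists>w\<in>Ins. R x w)"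
    proof (cases "z \<in> set N")
      case True
      then show ?thesis using reach_N_iff x a by blast
    next
      case False
      then have z: "z \<in> set old" using xyz set_new by blast
      have "x = r \<or> list_prec old x r" using prec_new_before_N x 1 a by blast
      moreover have "list_prec old r z" using prec_new_after_N z 1 a by blast
      ultimately show ?thesis
        using old_planar a r_in_Ins C_maximal Ins_sub_C z by blast
    qed
    then show ?thesis using reach_N_iff x 1 by blast
  next
    case 2
    then show ?thesis using planar_new_last_in_N x a by blast
  next
    case 3
    then show ?thesis using prec_new_old old_planar x a by metis
  qed
qed (use planar_new_prec in blast)

end

definition edge_succ :: "('v, 'e) pgraph \<Rightarrow> ('e \<times> 'e) set" where
  "edge_succ G = {(x, y). x \<in> edges G \<and> y \<in> edges G \<and> tgt G x = src G y}"

lemma epath_rtrancl: "is_epath G es \<Longrightarrow> (hd es, last es) \<in> (edge_succ G)\<^sup>*"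
proof (induction es)
  case (Cons x es)
  show ?case
  proof (cases es)
    case (Cons y es')
    have "is_epath G es" using Cons.prems Cons unfolding is_epath_def by (auto simp: nth_Cons_Suc)
    moreover have "(x, y) \<in> edge_succ G"
      using Cons.prems Cons unfolding is_epath_def edge_succ_def by (auto dest: spec[of _ 0])
    ultimately show ?thesis using Cons.IH Cons by simp
  qed simp
qed (simp add: is_epath_def)

lemma trancl_epath: "(x, z) \<in> (edge_succ G)\<^sup>+ \<Longrightarrow> \<exists>es. is_epath G es \<and> hd es = x \<and> last es = z"
proof (induction rule: trancl_induct)
  case (base y)
  then have "is_epath G [x, y]" unfolding edge_succ_def is_epath_def by (auto simp: less_Suc_eq)
  then show ?case by force
next
  case (step y z)
  then obtain es where es: "is_epath G es" "hd es = x" "last es = y" by blast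
  have "is_epath G (es @ [z])"
    using es step(2) unfolding is_epath_def edge_succ_def
    by (auto simp: nth_append less_Suc_eq last_conv_nth) (metis One_nat_def diff_Suc_1 less_antisym)
  then show ?case using es by (metis append_is_Nil_conv hd_append2 is_epath_def last_snoc)
qed

lemma edge_reach_iff_trancl: "edge_reach G x z \<longleftrightarrow> x \<noteq> z \<and> (x, z) \<in> (edge_succ G)\<^sup>+"
  unfolding edge_reach_def using epath_rtrancl trancl_epath by (metis rtranclD)

section \<open>Layer decompositions of upward embeddings\<close>

locale layered_embedding =
  fixes G :: "('v, 'e) pgraph"
    and pV :: "'v \<Rightarrow> real \<times> real"
    and pE :: "'e \<Rightarrow> real \<Rightarrow> real \<times> real"
    and a b c d :: real
    and ys :: "nat \<Rightarrow> real"
    and n :: nat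
    and Ls :: "nat \<Rightarrow> 'e list"
  assumes progressive: "progressive_graph G"
    and upward: "upward_BP_embedding G pV pE a b c d"
    and layers: "layer_decomposition G pV c d ys n"
    and canonical: "\<forall>j \<in> {1..n}. canonical_layer_order G pV pE ys j (Ls j)"
begin

abbreviation height :: "'v \<Rightarrow> real" where "height v \<equiv> snd (pV v)"

abbreviation strip :: "nat \<Rightarrow> 'v set" where "strip k \<equiv> strip_internal G pV ys k"

lemma finite_edges: "finite (edges G)"
  and edge_ends: "e \<in> edges G \<Longrightarrow> src G e \<in> verts G \<and> tgt G e \<in> verts G"
  using progressive unfolding progressive_graph_def by auto

lemma BP: "BP_embedding G pV pE a b c d"
  using upward unfolding upward_BP_embedding_def by auto

lemma c_less_d: "c < d"
  using BP unfolding BP_embedding_def by auto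

lemma arc_edge: "e \<in> edges G \<Longrightarrow> arc (pE e) \<and> pE e 0 = pV (src G e) \<and> pE e 1 = pV (tgt G e)"
  using BP unfolding BP_embedding_def pathstart_def pathfinish_def by auto

lemma edge_descends:
  "e \<in> edges G \<Longrightarrow> 0 \<le> t1 \<Longrightarrow> t1 < t2 \<Longrightarrow> t2 \<le> 1 \<Longrightarrow> snd (pE e t2) < snd (pE e t1)"
  using upward unfolding upward_BP_embedding_def by auto

lemma tgt_below_src: "e \<in> edges G \<Longrightarrow> height (tgt G e) < height (src G e)"
  using edge_descends[of e 0 1] arc_edge[of e] by auto

lemma src_ne_tgt: "e \<in> edges G \<Longrightarrow> src G e \<noteq> tgt G e"
  using tgt_below_src by force

lemma sink_height: "is_sink G v \<Longrightarrow> height v = c"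
  using BP unfolding BP_embedding_def by auto

lemma vertex_cases:
  assumes "v \<in> verts G"
  shows "(is_source G v \<and> height v = d \<and> degree G v = 1) \<or> (is_sink G v \<and> height v = c \<and> degree G v = 1)
    \<or> (internal G v \<and> c < height v \<and> height v < d)"
proof (cases "degree G v = 1")
  case True
  then have "indeg G v = 0 \<or> outdeg G v = 0" unfolding degree_def by auto
  then show ?thesis using assms True BP unfolding is_source_def is_sink_def BP_embedding_def by auto
next
  case False
  then show ?thesis using assms BP unfolding internal_def BP_embedding_def by auto
qed

lemma degree_one_unique_edge:
  assumes "degree G w = 1" "e \<in> edges G" "f \<in> edges G"
    and "w = src G e \<or> w = tgt G e" "w = src G f \<or> w = tgt G f"
  shows "e = f"
proof (rule ccontr)
  assume ne: "e \<noteq> f"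
  let ?I = "{e \<in> edges G. tgt G e = w}" and ?O = "{e \<in> edges G. src G e = w}"
  have fin: "finite ?I" "finite ?O" using finite_edges by auto
  have "2 \<le> card ({e, f} \<inter> ?I) + card ({e, f} \<inter> ?O)"
    using assms ne by (cases "w = src G e"; cases "w = src G f") (auto simp: Int_insert_left)
  also have "\<dots> \<le> card ?I + card ?O"
    using card_mono[OF fin(1), of "{e, f} \<inter> ?I"] card_mono[OF fin(2), of "{e, f} \<inter> ?O"] by auto
  finally show False using assms(1) unfolding degree_def indeg_def outdeg_def by auto
qed

lemma internal_has_in_edge: "internal G v \<Longrightarrow> \<exists>e\<in>edges G. tgt G e = v"
  and internal_has_out_edge: "internal G v \<Longrightarrow> \<exists>e\<in>edges G. src G e = v"
  using progressive
  unfolding internal_def progressive_graph_def is_source_def is_sink_def indeg_def outdeg_def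
  by (metis (mono_tags, lifting) card.empty empty_Collect_eq)+

lemma src_not_sink: "e \<in> edges G \<Longrightarrow> \<not> is_sink G (src G e)"
  and tgt_not_source: "e \<in> edges G \<Longrightarrow> \<not> is_source G (tgt G e)"
  using finite_edges unfolding is_sink_def is_source_def outdeg_def indeg_def
  by (auto simp: card_eq_0_iff)

lemma src_height_bounds: "e \<in> edges G \<Longrightarrow> c < height (src G e) \<and> height (src G e) \<le> d"
  using vertex_cases[of "src G e"] edge_ends[of e] src_not_sink[of e] c_less_d by auto

lemma tgt_height_bounds: "e \<in> edges G \<Longrightarrow> c \<le> height (tgt G e) \<and> height (tgt G e) < d"
  using vertex_cases[of "tgt G e"] edge_ends[of e] tgt_not_source[of e] c_less_d by auto

lemma ys_0: "ys 0 = d" and ys_n: "ys n = c" and ys_Suc_less: "j < n \<Longrightarrow> ys (Suc j) < ys j"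
  and no_vertex_on_line: "0 < j \<Longrightarrow> j < n \<Longrightarrow> v \<in> verts G \<Longrightarrow> height v \<noteq> ys j"
  and card_strip_le_1: "j \<in> {1..n} \<Longrightarrow> card (strip j) \<le> 1"
  using layers unfolding layer_decomposition_def by auto

lemma n_pos: "0 < n"
  using ys_0 ys_n c_less_d by (cases n) auto

lemma ys_strict_antimono: "i < k \<Longrightarrow> k \<le> n \<Longrightarrow> ys k < ys i"
proof (induction k)
  case (Suc k)
  then show ?case using ys_Suc_less[of k] by (cases "i = k") auto
qed simp

lemma ys_antimono: "i \<le> k \<Longrightarrow> k \<le> n \<Longrightarrow> ys k \<le> ys i"
  using ys_strict_antimono by (cases "i = k") (auto simp: less_imp_le)

lemma strip_unique: "1 \<le> k \<Longrightarrow> k \<le> n \<Longrightarrow> v \<in> strip k \<Longrightarrow> w \<in> strip k \<Longrightarrow> v = w"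
  using card_strip_le_1[of k] finite_subset[of "strip k" "verts G"] progressive
    card_le_Suc0_iff_eq[of "strip k"]
  unfolding progressive_graph_def strip_internal_def by auto

lemma on_line_degree_one: "w \<in> verts G \<Longrightarrow> i \<le> n \<Longrightarrow> height w = ys i \<Longrightarrow> degree G w = 1"
  using vertex_cases[of w] no_vertex_on_line[of i w] ys_0 ys_n c_less_d
  by (cases "i = 0"; cases "i = n") auto

lemma strip_internalI:
  assumes "w \<in> verts G" "1 \<le> k" "k \<le> n" "ys k < height w" "height w < ys (k - 1)"
  shows "w \<in> strip k"
proof -
  have "c \<le> ys k" "ys (k - 1) \<le> d"
    using ys_antimono[of k n] ys_antimono[of 0 "k - 1"] ys_0 ys_n assms by auto
  then show ?thesis using vertex_cases[of w] assms unfolding strip_internal_def by auto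
qed

lemma strip_internalD:
  assumes "v \<in> strip k" "1 \<le> k" "k \<le> n"
  shows "v \<in> verts G \<and> internal G v \<and> ys k < height v \<and> height v < ys (k - 1)"
proof -
  have v: "v \<in> verts G" "internal G v" "ys k \<le> height v" "height v \<le> ys (k - 1)"
    using assms(1) unfolding strip_internal_def by auto
  then have "c < height v \<and> height v < d" using vertex_cases[of v] unfolding internal_def by auto
  then have "height v \<noteq> ys k" "height v \<noteq> ys (k - 1)"
    using no_vertex_on_line[of k v] no_vertex_on_line[of "k - 1" v] v ys_0 ys_n assms(2,3)
    by (cases "k = n"; cases "k = 1"; auto)+
  then show ?thesis using v by auto
qed

lemma below_strip:
  "w \<in> verts G \<Longrightarrow> height w < ys (k - 1) \<Longrightarrow> w \<notin> strip k \<Longrightarrow> 1 \<le> k \<Longrightarrow> k < n \<Longrightarrow> height w < ys k"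
  using no_vertex_on_line[of k w] strip_internalI[of w k] by force

lemma above_strip:
  "w \<in> verts G \<Longrightarrow> ys k < height w \<Longrightarrow> w \<notin> strip k \<Longrightarrow> 1 \<le> k \<Longrightarrow> k \<le> n \<Longrightarrow> ys (k - 1) \<le> height w"
  using strip_internalI[of w k] by force

lemma edge_succ_trancl_height:
  "(x, z) \<in> (edge_succ G)\<^sup>+ \<Longrightarrow> height (src G z) \<le> height (tgt G x) \<and> x \<in> edges G \<and> z \<in> edges G"
proof (induction rule: trancl_induct)
  case (step y z)
  then show ?case unfolding edge_succ_def using tgt_below_src[of y] by auto
qed (auto simp: edge_succ_def)

lemma edge_reach_iff: "edge_reach G x z \<longleftrightarrow> (x, z) \<in> (edge_succ G)\<^sup>+"
proof -
  have "x \<noteq> z" if "(x, z) \<in> (edge_succ G)\<^sup>+"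
    using edge_succ_trancl_height[OF that] tgt_below_src[of x] by auto
  then show ?thesis unfolding edge_reach_iff_trancl by auto
qed

lemma edge_reach_height:
  "edge_reach G x z \<Longrightarrow> height (src G z) \<le> height (tgt G x) \<and> x \<in> edges G \<and> z \<in> edges G"
  using edge_reach_iff edge_succ_trancl_height by blast

lemma edge_reach_trans: "edge_reach G x y \<Longrightarrow> edge_reach G y z \<Longrightarrow> edge_reach G x z"
  using edge_reach_iff by auto

lemma edge_reach_step: "x \<in> edges G \<Longrightarrow> y \<in> edges G \<Longrightarrow> tgt G x = src G y \<Longrightarrow> edge_reach G x y"
  unfolding edge_reach_iff by (rule r_into_trancl) (simp add: edge_succ_def)

lemma edge_reach_iff_into_src:
  assumes "x \<in> edges G" "z \<in> edges G"
  shows "edge_reach G x z \<longleftrightarrow> tgt G x = src G z \<or> (\<exists>w. edge_reach G x w \<and> tgt G w = src G z)"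
proof
  assume "edge_reach G x z"
  then have "(x, z) \<in> (edge_succ G)\<^sup>+" by (simp add: edge_reach_iff)
  then show "tgt G x = src G z \<or> (\<exists>w. edge_reach G x w \<and> tgt G w = src G z)"
    by (rule tranclE) (auto simp: edge_succ_def edge_reach_iff)
next
  assume "tgt G x = src G z \<or> (\<exists>w. edge_reach G x w \<and> tgt G w = src G z)"
  then show "edge_reach G x z"
  proof
    assume "\<exists>w. edge_reach G x w \<and> tgt G w = src G z"
    then obtain w where w: "edge_reach G x w" "tgt G w = src G z" by blast
    then show ?thesis using edge_reach_step[of w z] edge_reach_height[OF w(1)] assms edge_reach_trans by blast
  qed (use assms edge_reach_step in blast)
qed

subsection \<open>Arcs as graphs over the vertical axis\<close>

abbreviation x_at :: "'e \<Rightarrow> real \<Rightarrow> real" where "x_at e h \<equiv> xat pE e h"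

lemma param_at_height_unique:
  assumes e: "e \<in> edges G" and h: "height (tgt G e) \<le> h" "h \<le> height (src G e)"
  shows "\<exists>!\<tau>. \<tau> \<in> {0..1} \<and> snd (pE e \<tau>) = h"
proof -
  have "continuous_on {0..1} (\<lambda>t. snd (pE e t))"
    using arc_edge[OF e] arc_imp_path unfolding path_def by (blast intro: continuous_intros)
  then have "\<exists>x. 0 \<le> x \<and> x \<le> 1 \<and> snd (pE e x) = h"
    using IVT2'[of "\<lambda>t. snd (pE e t)" 1 h 0] arc_edge[OF e] h by auto
  moreover have "\<tau>1 = \<tau>2"
    if "\<tau>1 \<in> {0..1}" "\<tau>2 \<in> {0..1}" "snd (pE e \<tau>1) = h" "snd (pE e \<tau>2) = h" for \<tau>1 \<tau>2
    using edge_descends[OF e, of \<tau>1 \<tau>2] edge_descends[OF e, of \<tau>2 \<tau>1] that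
    by (cases "\<tau>1 < \<tau>2"; cases "\<tau>2 < \<tau>1") auto
  ultimately show ?thesis by auto
qed

lemma arc_height_bounds:
  assumes e: "e \<in> edges G" and t: "\<tau> \<in> {0..1}"
  shows "height (tgt G e) \<le> snd (pE e \<tau>) \<and> snd (pE e \<tau>) \<le> height (src G e)"
  using edge_descends[OF e, of \<tau> 1] edge_descends[OF e, of 0 \<tau>] arc_edge[OF e] t
  by (cases "\<tau> = 0"; cases "\<tau> = 1") (auto simp: less_eq_real_def)

lemma x_at_on_arc:
  assumes e: "e \<in> edges G" and h: "height (tgt G e) \<le> h" "h \<le> height (src G e)"
  shows "(x_at e h, h) \<in> path_image (pE e)"
proof -
  define \<tau> where "\<tau> = (THE \<tau>. \<tau> \<in> {0..1} \<and> snd (pE e \<tau>) = h)"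
  have t: "\<tau> \<in> {0..1} \<and> snd (pE e \<tau>) = h"
    unfolding \<tau>_def using theI'[OF param_at_height_unique[OF e h]] .
  have "pE e \<tau> = (x_at e h, h)" unfolding xat_def \<tau>_def[symmetric] using t by (metis prod.collapse)
  then show ?thesis using t unfolding path_image_def by (metis image_eqI)
qed

lemma x_at_arc_point:
  assumes e: "e \<in> edges G" and t: "\<tau> \<in> {0..1}"
  shows "x_at e (snd (pE e \<tau>)) = fst (pE e \<tau>)"
proof -
  have h: "height (tgt G e) \<le> snd (pE e \<tau>)" "snd (pE e \<tau>) \<le> height (src G e)"
    using arc_height_bounds[OF e t] by auto
  have "(THE \<tau>'. \<tau>' \<in> {0..1} \<and> snd (pE e \<tau>') = snd (pE e \<tau>)) = \<tau>"
    using param_at_height_unique[OF e h] t by (metis (mono_tags, lifting) the_equality)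
  then show ?thesis unfolding xat_def by simp
qed

lemma x_at_tgt: "e \<in> edges G \<Longrightarrow> x_at e (height (tgt G e)) = fst (pV (tgt G e))"
  using x_at_arc_point[of e 1] arc_edge[of e] by auto

lemma x_at_src: "e \<in> edges G \<Longrightarrow> x_at e (height (src G e)) = fst (pV (src G e))"
  using x_at_arc_point[of e 0] arc_edge[of e] by auto

lemma continuous_on_x_at:
  assumes e: "e \<in> edges G"
  shows "continuous_on {height (tgt G e)..height (src G e)} (x_at e)"
proof -
  let ?H = "{height (tgt G e)..height (src G e)}"
  define g where "g = (\<lambda>h. THE \<tau>. \<tau> \<in> {0..1} \<and> snd (pE e \<tau>) = h)"
  have "continuous_on {0..1} (pE e)" using arc_edge[OF e] arc_imp_path unfolding path_def by blast
  then have cont: "continuous_on {0..1} (\<lambda>t. snd (pE e t))" "continuous_on {0..1} (\<lambda>t. fst (pE e t))"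
    by (auto intro: continuous_intros)
  have img: "(\<lambda>t. snd (pE e t)) ` {0..1} = ?H"
  proof
    show "?H \<subseteq> (\<lambda>t. snd (pE e t)) ` {0..1}"
    proof
      fix h assume "h \<in> ?H"
      then obtain \<tau> where "\<tau> \<in> {0..1}" "snd (pE e \<tau>) = h" using param_at_height_unique[OF e, of h] by auto
      then show "h \<in> (\<lambda>t. snd (pE e t)) ` {0..1}" by (metis image_eqI)
    qed
  qed (use arc_height_bounds[OF e] in auto)
  have inv: "\<forall>t\<in>{0..1}. g (snd (pE e t)) = t"
  proof
    fix t :: real assume t: "t \<in> {0..1}"
    have h: "height (tgt G e) \<le> snd (pE e t)" "snd (pE e t) \<le> height (src G e)"
      using arc_height_bounds[OF e t] by auto
    show "g (snd (pE e t)) = t"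
      unfolding g_def using param_at_height_unique[OF e h] t by (metis (mono_tags, lifting) the_equality)
  qed
  have cg: "continuous_on ?H g" using continuous_on_inv[OF cont(1) _ inv] img by auto
  have gH: "g ` ?H \<subseteq> {0..1}"
  proof
    fix x assume "x \<in> g ` ?H"
    then obtain h where "h \<in> (\<lambda>t. snd (pE e t)) ` {0..1}" "x = g h" using img by auto
    then show "x \<in> {0..1}" using inv by auto
  qed
  have "continuous_on ?H ((\<lambda>t. fst (pE e t)) \<circ> g)"
    by (rule continuous_on_compose[OF cg continuous_on_subset[OF cont(2) gH]])
  then show ?thesis unfolding g_def xat_def comp_def .
qed

lemma x_at_order_preserved:
  assumes e: "e \<in> edges G" and f: "f \<in> edges G" and h: "h1 \<le> h2"
    and se: "height (tgt G e) \<le> h1" "h2 \<le> height (src G e)"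
    and sf: "height (tgt G f) \<le> h1" "h2 \<le> height (src G f)"
    and disjoint: "\<forall>h\<in>{h1..h2}. x_at e h \<noteq> x_at f h"
  shows "x_at e h1 < x_at f h1 \<longleftrightarrow> x_at e h2 < x_at f h2"
proof -
  define g where "g = (\<lambda>h. x_at e h - x_at f h)"
  have "continuous_on {h1..h2} (x_at e)"
    using continuous_on_x_at[OF e] continuous_on_subset se by fastforce
  moreover have "continuous_on {h1..h2} (x_at f)"
    using continuous_on_x_at[OF f] continuous_on_subset sf by fastforce
  ultimately have cg: "continuous_on {h1..h2} g" unfolding g_def by (intro continuous_intros)
  have nz: "\<forall>h\<in>{h1..h2}. g h \<noteq> 0" using disjoint unfolding g_def by auto
  have "g h2 < 0" if neg: "g h1 < 0"
  proof (rule ccontr)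
    assume "\<not> g h2 < 0"
    then obtain x where "h1 \<le> x" "x \<le> h2" "g x = 0" using IVT'[of g h1 0 h2, OF _ _ h cg] neg by auto
    then show False using nz by auto
  qed
  moreover have "g h1 < 0" if neg: "g h2 < 0"
  proof (rule ccontr)
    assume "\<not> g h1 < 0"
    then obtain x where "h1 \<le> x" "x \<le> h2" "g x = 0" using IVT2'[of g h2 0 h1, OF _ _ h cg] neg by auto
    then show False using nz by auto
  qed
  ultimately show ?thesis unfolding g_def by auto
qed

lemma x_at_eq_imp_common_vertex:
  assumes e: "e \<in> edges G" and f: "f \<in> edges G" and ne: "e \<noteq> f"
    and se: "height (tgt G e) \<le> h" "h \<le> height (src G e)"
    and sf: "height (tgt G f) \<le> h" "h \<le> height (src G f)"
    and eq: "x_at e h = x_at f h"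
  shows "\<exists>w. pV w = (x_at e h, h) \<and> (w = src G e \<or> w = tgt G e) \<and> (w = src G f \<or> w = tgt G f)"
proof -
  have "(x_at e h, h) \<in> path_image (pE e) \<inter> path_image (pE f)"
    using x_at_on_arc[OF e se] x_at_on_arc[OF f sf] eq by auto
  then have "(x_at e h, h) \<in> pV ` ({src G e, tgt G e} \<inter> {src G f, tgt G f})"
    using BP e f ne unfolding BP_embedding_def by blast
  then show ?thesis by auto
qed

lemma x_at_ne_vertex:
  assumes f: "f \<in> edges G" and v: "v \<in> verts G" "v \<noteq> src G f" "v \<noteq> tgt G f"
    and h: "height (tgt G f) \<le> height v" "height v \<le> height (src G f)"
  shows "x_at f (height v) \<noteq> fst (pV v)"
proof
  assume "x_at f (height v) = fst (pV v)"
  then have "pV v = (x_at f (height v), height v)" by (metis prod.collapse)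
  then show False using x_at_on_arc[OF f h] BP f v unfolding BP_embedding_def by auto
qed

definition upper_edges :: "nat \<Rightarrow> 'e set" where
  "upper_edges j = {e \<in> edges G. ys j \<le> height (src G e)}"

definition cut_edges :: "nat \<Rightarrow> 'e set" where
  "cut_edges j = {e \<in> upper_edges j. height (tgt G e) < ys j}"

lemma layer_in_iff_cut: assumes k: "1 \<le> k" "k \<le> n" shows "layer_in G pV ys k e \<longleftrightarrow> e \<in> cut_edges (k-1)"
proof
  assume a: "layer_in G pV ys k e"
  then have e: "e \<in> edges G" "height (tgt G e) < ys (k-1)" "ys k < height (src G e)" "src G e \<notin> strip k"
    unfolding layer_in_def layer_edges_def by auto
  then have "ys (k-1) \<le> height (src G e)" using above_strip[of "src G e" k] edge_ends[of e] k by auto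
  then show "e \<in> cut_edges (k-1)" using e unfolding cut_edges_def upper_edges_def by auto
next
  assume a: "e \<in> cut_edges (k-1)"
  then have e: "e \<in> edges G" "height (tgt G e) < ys (k-1)" "ys (k-1) \<le> height (src G e)" unfolding cut_edges_def upper_edges_def by auto
  have "ys k < ys (k-1)" using ys_strict_antimono[of "k-1" k] k by auto
  moreover have "src G e \<notin> strip k" using strip_internalD[of "src G e" k] k e by auto
  ultimately show "layer_in G pV ys k e" using e unfolding layer_in_def layer_edges_def by auto
qed

lemma layer_out_iff_cut: assumes k: "1 \<le> k" "k < n" shows "layer_out G pV ys k e \<longleftrightarrow> e \<in> cut_edges k"
proof
  assume a: "layer_out G pV ys k e"
  then have e: "e \<in> edges G" "height (tgt G e) < ys (k-1)" "ys k < height (src G e)" "tgt G e \<notin> strip k"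
    unfolding layer_out_def layer_edges_def by auto
  then have "height (tgt G e) < ys k" using below_strip[of "tgt G e" k] edge_ends[of e] k by auto
  then show "e \<in> cut_edges k" using e unfolding cut_edges_def upper_edges_def by auto
next
  assume a: "e \<in> cut_edges k"
  then have e: "e \<in> edges G" "height (tgt G e) < ys k" "ys k \<le> height (src G e)" unfolding cut_edges_def upper_edges_def by auto
  have "height (src G e) \<noteq> ys k" using no_vertex_on_line[of k "src G e"] k edge_ends[of e] e by auto
  moreover have "ys k \<le> ys (k-1)" using ys_antimono[of "k-1" k] k by auto
  moreover have "tgt G e \<notin> strip k" using strip_internalD[of "tgt G e" k] k e by auto
  ultimately show "layer_out G pV ys k e" using e unfolding layer_out_def layer_edges_def by auto
qed

lemma layer_edges_iff: assumes k: "1 \<le> k" "k \<le> n"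
  shows "e \<in> layer_edges G pV ys k \<longleftrightarrow> e \<in> cut_edges (k-1) \<or> (e \<in> edges G \<and> src G e \<in> strip k)"
proof
  assume a: "e \<in> layer_edges G pV ys k"
  show "e \<in> cut_edges (k-1) \<or> (e \<in> edges G \<and> src G e \<in> strip k)"
  proof (cases "src G e \<in> strip k")
    case True then show ?thesis using a unfolding layer_edges_def by auto
  next
    case False then have "layer_in G pV ys k e" using a unfolding layer_in_def by auto
    then show ?thesis using layer_in_iff_cut k by auto
  qed
next
  assume "e \<in> cut_edges (k-1) \<or> (e \<in> edges G \<and> src G e \<in> strip k)"
  then show "e \<in> layer_edges G pV ys k"
  proof
    assume "e \<in> cut_edges (k-1)" then show ?thesis using layer_in_iff_cut k unfolding layer_in_def by auto
  next
    assume e: "e \<in> edges G \<and> src G e \<in> strip k"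
    then show ?thesis using strip_internalD[of "src G e" k] k tgt_below_src[of e] unfolding layer_edges_def by auto
  qed
qed

lemma upper_step: assumes k: "1 \<le> k" "k \<le> n"
  shows "e \<in> upper_edges k \<longleftrightarrow> e \<in> upper_edges (k-1) \<or> (e \<in> edges G \<and> src G e \<in> strip k)"
proof
  assume e: "e \<in> upper_edges k"
  show "e \<in> upper_edges (k-1) \<or> (e \<in> edges G \<and> src G e \<in> strip k)"
  proof (cases "ys (k-1) \<le> height (src G e)")
    case True then show ?thesis using e unfolding upper_edges_def by auto
  next
    case False
    have "height (src G e) \<noteq> ys k"
    proof (cases "k = n")
      case True then show ?thesis using src_height_bounds[of e] e ys_n unfolding upper_edges_def by auto
    next
      case False then show ?thesis using no_vertex_on_line[of k "src G e"] k e edge_ends[of e] unfolding upper_edges_def by auto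
    qed
    then have "src G e \<in> strip k" using strip_internalI[of "src G e" k] e False k edge_ends[of e] unfolding upper_edges_def by auto
    then show ?thesis using e unfolding upper_edges_def by auto
  qed
next
  assume "e \<in> upper_edges (k-1) \<or> (e \<in> edges G \<and> src G e \<in> strip k)"
  then show "e \<in> upper_edges k"
  proof
    assume "e \<in> upper_edges (k-1)" then show ?thesis using ys_antimono[of "k-1" k] k unfolding upper_edges_def by auto
  next
    assume "e \<in> edges G \<and> src G e \<in> strip k" then show ?thesis using strip_internalD[of "src G e" k] k unfolding upper_edges_def by auto
  qed
qed

lemma cut_step: assumes k: "1 \<le> k" "k < n"
  shows "e \<in> cut_edges k \<longleftrightarrow> (e \<in> cut_edges (k-1) \<and> tgt G e \<notin> strip k) \<or> (e \<in> edges G \<and> src G e \<in> strip k)"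
proof
  assume e: "e \<in> cut_edges k"
  then have "e \<in> upper_edges (k-1) \<or> (e \<in> edges G \<and> src G e \<in> strip k)" using upper_step[of k e] k unfolding cut_edges_def by auto
  then show "(e \<in> cut_edges (k-1) \<and> tgt G e \<notin> strip k) \<or> (e \<in> edges G \<and> src G e \<in> strip k)"
  proof
    assume e1: "e \<in> upper_edges (k-1)"
    have "height (tgt G e) < ys (k-1)" using e ys_antimono[of "k-1" k] k unfolding cut_edges_def by auto
    moreover have "tgt G e \<notin> strip k" using strip_internalD[of "tgt G e" k] k e unfolding cut_edges_def by auto
    ultimately show ?thesis using e1 unfolding cut_edges_def by auto
  qed auto
next
  assume "(e \<in> cut_edges (k-1) \<and> tgt G e \<notin> strip k) \<or> (e \<in> edges G \<and> src G e \<in> strip k)"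
  then show "e \<in> cut_edges k"
  proof
    assume e: "e \<in> cut_edges (k-1) \<and> tgt G e \<notin> strip k"
    then have "height (tgt G e) < ys k" using below_strip[of "tgt G e" k] edge_ends[of e] k unfolding cut_edges_def upper_edges_def by auto
    moreover have "e \<in> upper_edges k" using upper_step[of k e] e k unfolding cut_edges_def by auto
    ultimately show ?thesis unfolding cut_edges_def by auto
  next
    assume e: "e \<in> edges G \<and> src G e \<in> strip k"
    have "tgt G e \<notin> strip k" using strip_unique[of k "src G e" "tgt G e"] src_ne_tgt[of e] e k by auto
    moreover have "height (tgt G e) < ys (k-1)" using strip_internalD[of "src G e" k] tgt_below_src[of e] e k by auto
    ultimately have "height (tgt G e) < ys k" using below_strip[of "tgt G e" k] edge_ends[of e] k e by auto
    moreover have "e \<in> upper_edges k" using upper_step[of k e] e k by auto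
    ultimately show ?thesis unfolding cut_edges_def by auto
  qed
qed

lemma upper_n: "upper_edges n = edges G" using src_height_bounds ys_n unfolding upper_edges_def by fastforce

lemma cut_0: "cut_edges 0 = upper_edges 0" using tgt_height_bounds ys_0 unfolding cut_edges_def upper_edges_def by fastforce

lemma reaches_cut: "i < n \<Longrightarrow> y \<in> upper_edges i \<Longrightarrow> y \<in> cut_edges i \<or> (\<exists>u\<in>cut_edges i. edge_reach G y u)"
proof (induction "card {e \<in> edges G. height (src G e) < height (src G y)}" arbitrary: y rule: less_induct)
  case less
  show ?case
  proof (cases "height (tgt G y) < ys i")
    case True then show ?thesis using less.prems unfolding cut_edges_def by auto
  next
    case False
    have y: "y \<in> edges G" using less.prems unfolding upper_edges_def by auto
    have "c < ys i" using ys_strict_antimono[of i n] less.prems ys_n by auto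
    then have "\<not> is_sink G (tgt G y)" using False sink_height by force
    then have "internal G (tgt G y)" using vertex_cases[of "tgt G y"] edge_ends[OF y] tgt_not_source[OF y] by auto
    then obtain y' where y': "y' \<in> edges G" "src G y' = tgt G y" using internal_has_out_edge by blast
    have r: "edge_reach G y y'" using edge_reach_step[OF y y'(1)] y'(2) by auto
    have y'E: "y' \<in> upper_edges i" using y' False unfolding upper_edges_def by auto
    have sub: "{e \<in> edges G. height (src G e) < height (src G y')} \<subset> {e \<in> edges G. height (src G e) < height (src G y)}"
    proof
      show "{e \<in> edges G. height (src G e) < height (src G y')} \<subseteq> {e \<in> edges G. height (src G e) < height (src G y)}"
        using y' tgt_below_src[OF y] by auto
      have "y' \<in> {e \<in> edges G. height (src G e) < height (src G y)}" using y' tgt_below_src[OF y] by auto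
      then show "{e \<in> edges G. height (src G e) < height (src G y')} \<noteq> {e \<in> edges G. height (src G e) < height (src G y)}"
        by blast
    qed
    have "card {e \<in> edges G. height (src G e) < height (src G y')} < card {e \<in> edges G. height (src G e) < height (src G y)}"
      using psubset_card_mono[OF _ sub] finite_edges by auto
    then have "y' \<in> cut_edges i \<or> (\<exists>u\<in>cut_edges i. edge_reach G y' u)" using less.hyps[OF _ less.prems(1) y'E] by blast
    then show ?thesis using r edge_reach_trans by blast
  qed
qed

lemma cut_not_reach_upper: "u \<in> cut_edges i \<Longrightarrow> z \<in> upper_edges i \<Longrightarrow> \<not> edge_reach G u z"
  using edge_reach_height[of u z] unfolding cut_edges_def upper_edges_def by auto

lemma strip_out_edge_not_reach_upper: assumes k: "1 \<le> k" "k \<le> n" and x: "x \<in> edges G" "src G x \<in> strip k" and z: "z \<in> upper_edges k"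
  shows "\<not> edge_reach G x z"
proof
  assume r: "edge_reach G x z"
  then have h: "height (src G z) \<le> height (tgt G x)" "z \<in> edges G" using edge_reach_height by auto
  have zk: "ys k \<le> height (src G z)" using z unfolding upper_edges_def by auto
  have tS: "tgt G x \<notin> strip k" using strip_unique[of k "src G x" "tgt G x"] src_ne_tgt[OF x(1)] x k by auto
  have tl: "height (tgt G x) < ys (k-1)" using strip_internalD[of "src G x" k] tgt_below_src[OF x(1)] x k by auto
  show False
  proof (cases "height (tgt G x) = ys k")
    case True
    show False
    proof (cases "k = n")
      case True then show False using h zk src_height_bounds[of z] ys_n \<open>height (tgt G x) = ys k\<close> by auto
    next
      case False then show False using no_vertex_on_line[of k "tgt G x"] edge_ends[OF x(1)] k True by auto
    qed
  next
    case False
    then have "ys k < height (tgt G x)" using h zk by auto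
    then show False using strip_internalI[of "tgt G x" k] edge_ends[OF x(1)] k tl tS by auto
  qed
qed

subsection \<open>Canonical keys and the left-to-right order of cut edges\<close>

abbreviation ckey :: "nat \<Rightarrow> 'e \<Rightarrow> real \<times> nat \<times> real" where
  "ckey k e \<equiv> canon_key G pV pE ys k e"

lemma canon_key_no_vertex: "strip k = {} \<Longrightarrow> ckey k e = (x_at e (ys (k-1)), 0, 0)"
  unfolding canon_key_def layer_height_def by auto

lemma canon_key_vertex:
  assumes "1 \<le> k" "k \<le> n" "v \<in> strip k"
  shows "ckey k e = (if tgt G e = v then (fst (pV v), 0, x_at e (ys (k-1)))
    else if src G e = v then (fst (pV v), 1, x_at e (ys k)) else (x_at e (height v), 0, 0))"
proof -
  have "w \<in> strip k \<longleftrightarrow> w = v" for w using strip_unique[OF assms] assms(3) by blast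
  moreover have "(THE w. w \<in> strip k) = v" using strip_unique[OF assms] assms(3) by (metis the_equality)
  ultimately show ?thesis unfolding canon_key_def layer_height_def by auto
qed

lemma lex_less_irrefl: "\<not> lex_less x x"
  unfolding lex_less_def by (auto split: prod.splits)

lemma x_at_eq_in_strip: assumes k: "1 \<le> k" "k \<le> n" and e: "e \<in> edges G" and f: "f \<in> edges G" and ne: "e \<noteq> f"
  and h: "ys k \<le> h" "h \<le> ys (k-1)"
  and se: "height (tgt G e) \<le> h" "h \<le> height (src G e)" and sf: "height (tgt G f) \<le> h" "h \<le> height (src G f)"
  and eq: "x_at e h = x_at f h"
  shows "\<exists>v\<in>strip k. (v = src G e \<or> v = tgt G e) \<and> (v = src G f \<or> v = tgt G f)"
proof -
  obtain w where w: "pV w = (x_at e h, h)" "w = src G e \<or> w = tgt G e" "w = src G f \<or> w = tgt G f"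
    using x_at_eq_imp_common_vertex[OF e f ne se sf eq] by blast
  have wv: "w \<in> verts G" using w edge_ends[OF e] by auto
  have hw: "height w = h" using w by simp
  have "degree G w \<noteq> 1" using degree_one_unique_edge[OF _ e f w(2) w(3)] ne by auto
  moreover have "k - 1 \<le> n" using k by simp
  ultimately have "height w \<noteq> ys k" "height w \<noteq> ys (k-1)"
    using on_line_degree_one[OF wv, of k] on_line_degree_one[OF wv, of "k-1"] k by blast+
  then have "w \<in> strip k" using strip_internalI[OF wv k] hw h by auto
  then show ?thesis using w by auto
qed

lemma x_at_order_in_strip: assumes k: "1 \<le> k" "k \<le> n" and e: "e \<in> edges G" and f: "f \<in> edges G" and ne: "e \<noteq> f"
  and h: "ys k \<le> h1" "h1 \<le> h2" "h2 \<le> ys (k-1)"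
  and se: "height (tgt G e) \<le> h1" "h2 \<le> height (src G e)" and sf: "height (tgt G f) \<le> h1" "h2 \<le> height (src G f)"
  and ni: "\<not> (\<exists>v\<in>strip k. (v = src G e \<or> v = tgt G e) \<and> (v = src G f \<or> v = tgt G f))"
  shows "x_at e h1 < x_at f h1 \<longleftrightarrow> x_at e h2 < x_at f h2"
proof (rule x_at_order_preserved[OF e f h(2) se sf])
  show "\<forall>h\<in>{h1..h2}. x_at e h \<noteq> x_at f h"
  proof
    fix h assume hh: "h \<in> {h1..h2}"
    show "x_at e h \<noteq> x_at f h"
    proof
      assume "x_at e h = x_at f h"
      then show False using x_at_eq_in_strip[OF k e f ne, of h] hh h se sf ni by auto
    qed
  qed
qed

lemma cut_above_strip: assumes k: "1 \<le> k" "k \<le> n" and e: "e \<in> cut_edges (k-1)"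
  shows "e \<in> edges G" "ys (k-1) \<le> height (src G e)" "src G e \<notin> strip k"
    "tgt G e \<notin> strip k \<Longrightarrow> height (tgt G e) \<le> ys k"
proof -
  show e1: "e \<in> edges G" "ys (k-1) \<le> height (src G e)" using e unfolding cut_edges_def upper_edges_def by auto
  show "src G e \<notin> strip k" using strip_internalD[of "src G e" k] k e1 by auto
  assume t: "tgt G e \<notin> strip k"
  show "height (tgt G e) \<le> ys k"
  proof (rule ccontr)
    assume "\<not> height (tgt G e) \<le> ys k"
    moreover have "height (tgt G e) < ys (k-1)" using e unfolding cut_edges_def by auto
    ultimately show False using strip_internalI[of "tgt G e" k] edge_ends[OF e1(1)] k t by auto
  qed
qed

lemma cut_below_strip: assumes k: "1 \<le> k" "k < n" and e: "e \<in> cut_edges k"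
  shows "e \<in> edges G" "height (tgt G e) < ys k" "tgt G e \<notin> strip k"
    "src G e \<notin> strip k \<Longrightarrow> ys (k-1) \<le> height (src G e)"
proof -
  show e1: "e \<in> edges G" "height (tgt G e) < ys k" using e unfolding cut_edges_def upper_edges_def by auto
  show "tgt G e \<notin> strip k" using strip_internalD[of "tgt G e" k] k e1 by auto
  assume s: "src G e \<notin> strip k"
  have "ys k \<le> height (src G e)" using e unfolding cut_edges_def upper_edges_def by auto
  moreover have "height (src G e) \<noteq> ys k" using no_vertex_on_line[of k "src G e"] k edge_ends[OF e1(1)] by auto
  ultimately show "ys (k-1) \<le> height (src G e)" using above_strip[of "src G e" k] edge_ends[OF e1(1)] k s by auto
qed

lemma x_at_ne_strip_vertex_upper:
  assumes k: "1 \<le> k" "k \<le> n" and v: "v \<in> strip k" and f: "f \<in> cut_edges (k-1)" "tgt G f \<noteq> v"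
  shows "x_at f (height v) \<noteq> fst (pV v)"
proof (rule x_at_ne_vertex)
  note fc = cut_above_strip[OF k f(1)] and vp = strip_internalD[OF v k]
  have "tgt G f \<notin> strip k" using strip_unique[OF k v] f(2) by blast
  then show "height (tgt G f) \<le> height v" using fc(4) vp by auto
  show "height v \<le> height (src G f)" using fc(2) vp by auto
  show "v \<noteq> src G f" using fc(3) v by auto
qed (use f cut_above_strip[OF k f(1)] strip_internalD[OF v k] in auto)

lemma x_at_ne_strip_vertex_lower:
  assumes k: "1 \<le> k" "k < n" and v: "v \<in> strip k" and f: "f \<in> cut_edges k" "src G f \<noteq> v"
  shows "x_at f (height v) \<noteq> fst (pV v)"
proof (rule x_at_ne_vertex)
  have kn: "k \<le> n" using k by simp
  note fc = cut_below_strip[OF k f(1)] and vp = strip_internalD[OF v k(1) kn]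
  have "src G f \<notin> strip k" using strip_unique[OF k(1) kn v] f(2) by blast
  then show "height v \<le> height (src G f)" using fc(4) vp by auto
  show "height (tgt G f) \<le> height v" using fc(2) vp by auto
  show "v \<noteq> tgt G f" using fc(3) v by auto
qed (use f cut_below_strip[OF k f(1)] strip_internalD[OF v] k in auto)

lemma canon_key_orders_upper_cut:
  assumes k: "1 \<le> k" "k \<le> n" and e: "e \<in> cut_edges (k-1)" and f: "f \<in> cut_edges (k-1)"
    and lx: "lex_less (ckey k e) (ckey k f)"
  shows "x_at e (ys (k-1)) < x_at f (ys (k-1))"
proof (cases "strip k = {}")
  case True
  then show ?thesis using lx canon_key_no_vertex[OF True] unfolding lex_less_def by auto
next
  case False
  then obtain v where v: "v \<in> strip k" by auto
  note key = canon_key_vertex[OF k v] and vp = strip_internalD[OF v k]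
  note ei = cut_above_strip[OF k e] and fi = cut_above_strip[OF k f]
  have src: "src G e \<noteq> v" "src G f \<noteq> v" using ei(3) fi(3) v by auto
  show ?thesis
  proof (cases "tgt G e = v \<and> tgt G f = v")
    case True
    then show ?thesis using lx key src unfolding lex_less_def by auto
  next
    case False
    have "x_at e (height v) < x_at f (height v)"
      using lx key src False x_at_tgt[OF ei(1)] x_at_tgt[OF fi(1)]
        x_at_ne_strip_vertex_upper[OF k v e] x_at_ne_strip_vertex_upper[OF k v f]
      unfolding lex_less_def by (auto split: if_splits)
    moreover have "x_at e (height v) < x_at f (height v) \<longleftrightarrow> x_at e (ys (k-1)) < x_at f (ys (k-1))"
    proof (rule x_at_order_in_strip[OF k ei(1) fi(1)])
      show "e \<noteq> f" using lx lex_less_irrefl by metis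
      have "tgt G e \<notin> strip k \<or> tgt G e = v" "tgt G f \<notin> strip k \<or> tgt G f = v"
        using strip_unique[OF k v] by blast+
      then show "height (tgt G e) \<le> height v" "height (tgt G f) \<le> height v"
        using ei(4) fi(4) vp by force+
      show "\<not> (\<exists>w\<in>strip k. (w = src G e \<or> w = tgt G e) \<and> (w = src G f \<or> w = tgt G f))"
        using strip_unique[OF k v] ei(3) fi(3) False by fastforce
    qed (use ei fi vp in auto)
    ultimately show ?thesis by simp
  qed
qed

lemma canon_key_orders_lower_cut:
  assumes k: "1 \<le> k" "k < n" and e: "e \<in> cut_edges k" and f: "f \<in> cut_edges k"
    and lx: "lex_less (ckey k e) (ckey k f)"
  shows "x_at e (ys k) < x_at f (ys k)"
proof -
  have kn: "k \<le> n" using k by simp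
  note ei = cut_below_strip[OF k e] and fi = cut_below_strip[OF k f]
  have ne: "e \<noteq> f" using lx lex_less_irrefl by metis
  show ?thesis
  proof (cases "strip k = {}")
    case True
    then have "x_at e (ys (k-1)) < x_at f (ys (k-1))"
      using lx canon_key_no_vertex[OF True] unfolding lex_less_def by auto
    moreover have "x_at e (ys k) < x_at f (ys k) \<longleftrightarrow> x_at e (ys (k-1)) < x_at f (ys (k-1))"
      by (rule x_at_order_in_strip[OF k(1) kn ei(1) fi(1) ne])
        (use True ei fi ys_strict_antimono[of "k-1" k] k in auto)
    ultimately show ?thesis by simp
  next
    case False
    then obtain v where v: "v \<in> strip k" by auto
    note key = canon_key_vertex[OF k(1) kn v] and vp = strip_internalD[OF v k(1) kn]
    have tgt: "tgt G e \<noteq> v" "tgt G f \<noteq> v" using ei(3) fi(3) v by auto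
    show ?thesis
    proof (cases "src G e = v \<and> src G f = v")
      case True
      then show ?thesis using lx key tgt unfolding lex_less_def by auto
    next
      case False
      have "x_at e (height v) < x_at f (height v)"
        using lx key tgt False x_at_src[OF ei(1)] x_at_src[OF fi(1)]
          x_at_ne_strip_vertex_lower[OF k v e] x_at_ne_strip_vertex_lower[OF k v f]
        unfolding lex_less_def by (auto split: if_splits)
      moreover have "x_at e (ys k) < x_at f (ys k) \<longleftrightarrow> x_at e (height v) < x_at f (height v)"
      proof (rule x_at_order_in_strip[OF k(1) kn ei(1) fi(1) ne])
        have "src G e \<notin> strip k \<or> src G e = v" "src G f \<notin> strip k \<or> src G f = v"
          using strip_unique[OF k(1) kn v] by blast+
        then show "height v \<le> height (src G e)" "height v \<le> height (src G f)"
          using ei(4) fi(4) vp by force+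
        show "\<not> (\<exists>w\<in>strip k. (w = src G e \<or> w = tgt G e) \<and> (w = src G f \<or> w = tgt G f))"
          using strip_unique[OF k(1) kn v] ei(3) fi(3) False by fastforce
      qed (use ei fi vp in auto)
      ultimately show ?thesis by simp
    qed
  qed
qed

lemma layer_order:
  assumes "1 \<le> k" "k \<le> n"
  shows "distinct (Ls k)" "set (Ls k) = layer_edges G pV ys k"
    "sorted_wrt (\<lambda>e f. lex_less (ckey k e) (ckey k f)) (Ls k)"
  using canonical assms unfolding canonical_layer_order_def by auto

lemma cut_sub_upper: "cut_edges j \<subseteq> upper_edges j"
  unfolding cut_edges_def by auto

lemma upper_sub_edges: "upper_edges j \<subseteq> edges G"
  unfolding upper_edges_def by auto

lemma cut_sub_edges: "e \<in> cut_edges j \<Longrightarrow> e \<in> edges G"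
  unfolding cut_edges_def upper_edges_def by auto

lemma layer_order_upper_cut_sorted:
  assumes k: "1 \<le> k" "k \<le> n"
  shows "sorted_wrt (\<lambda>e f. x_at e (ys (k-1)) < x_at f (ys (k-1))) (filter (\<lambda>e. e \<in> cut_edges (k-1)) (Ls k))"
proof -
  have "sorted_wrt (\<lambda>e f. lex_less (ckey k e) (ckey k f)) (filter (\<lambda>e. e \<in> cut_edges (k-1)) (Ls k))"
    using sorted_wrt_filter layer_order(3)[OF k] by blast
  then show ?thesis
    by (rule sorted_wrt_mono_rel[rotated]) (use canon_key_orders_upper_cut[OF k] in auto)
qed

lemma layer_order_lower_cut_sorted:
  assumes k: "1 \<le> k" "k < n"
  shows "sorted_wrt (\<lambda>e f. x_at e (ys k) < x_at f (ys k)) (filter (\<lambda>e. e \<in> cut_edges k) (Ls k))"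
proof -
  have "sorted_wrt (\<lambda>e f. lex_less (ckey k e) (ckey k f)) (filter (\<lambda>e. e \<in> cut_edges k) (Ls k))"
    using sorted_wrt_filter layer_order(3) k by fastforce
  then show ?thesis
    by (rule sorted_wrt_mono_rel[rotated]) (use canon_key_orders_lower_cut[OF k] in auto)
qed

lemma in_edge_of_strip_vertex_in_cut:
  assumes k: "1 \<le> k" "k \<le> n" and v: "v \<in> strip k" and e: "e \<in> edges G" "tgt G e = v"
  shows "e \<in> cut_edges (k-1)"
proof -
  note vp = strip_internalD[OF v k]
  have "src G e \<notin> strip k" using strip_unique[OF k v, of "src G e"] src_ne_tgt[OF e(1)] e by auto
  moreover have "ys k < height (src G e)" using tgt_below_src[OF e(1)] e vp by auto
  ultimately have "ys (k-1) \<le> height (src G e)"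
    using above_strip[of "src G e" k] edge_ends[OF e(1)] k by auto
  then show ?thesis using e vp unfolding cut_edges_def upper_edges_def by auto
qed

definition star_rank :: "'v \<Rightarrow> 'e \<Rightarrow> nat" where
  "star_rank v e = (if tgt G e = v then 1 else if src G e = v then 2
     else if x_at e (height v) < fst (pV v) then 0 else 3)"

lemma layer_order_star_rank_sorted:
  assumes k: "1 \<le> k" "k \<le> n" and v: "v \<in> strip k"
  shows "sorted (map (star_rank v) (Ls k))"
proof -
  have "star_rank v e \<le> star_rank v f"
    if "e \<in> set (Ls k)" "f \<in> set (Ls k)" "lex_less (ckey k e) (ckey k f)" for e f
  proof -
    have "g \<in> cut_edges (k-1)" if "g \<in> set (Ls k)" "src G g \<noteq> v" for g
      using that layer_order(2)[OF k] layer_edges_iff[OF k] strip_unique[OF k v] by blast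
    then show ?thesis
      using that canon_key_vertex[OF k v] x_at_ne_strip_vertex_upper[OF k v] src_ne_tgt
      unfolding star_rank_def lex_less_def by (auto split: if_splits)
  qed
  then show ?thesis
    unfolding sorted_map by (rule sorted_wrt_mono_rel[OF _ layer_order(3)[OF k]])
qed

lemma layer_order_decomposition:
  assumes k: "1 \<le> k" "k \<le> n" and v: "v \<in> strip k"
  obtains A Is N B where "Ls k = A @ Is @ N @ B" "Is \<noteq> []"
    "\<forall>x\<in>set A \<union> set B. x \<in> cut_edges (k-1) \<and> tgt G x \<noteq> v"
    "\<forall>x\<in>set Is. x \<in> cut_edges (k-1) \<and> tgt G x = v"
    "\<forall>x\<in>set N. x \<notin> cut_edges (k-1)"
    "set Is = {e \<in> edges G. tgt G e = v}" "set N = {e \<in> edges G. src G e = v}"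
proof -
  let ?M = "Ls k" and ?part = "\<lambda>i. filter (\<lambda>x. star_rank v x = i) (Ls k)"
  note vp = strip_internalD[OF v k]
  have strip_v: "w \<in> strip k \<longleftrightarrow> w = v" for w
    using strip_unique[OF k v] v by blast
  have mem: "e \<in> set ?M \<longleftrightarrow> e \<in> cut_edges (k-1) \<or> (e \<in> edges G \<and> src G e = v)" for e
    using layer_order(2)[OF k] layer_edges_iff[OF k] strip_v by auto
  have out_not_cut: "e \<notin> cut_edges (k-1)" if "src G e = v" for e
    using cut_above_strip(3)[OF k, of e] that v by auto
  have "?M = concat (map ?part [0..<4])"
    by (rule sorted_key_blocks[OF layer_order_star_rank_sorted[OF k v]]) (auto simp: star_rank_def)
  also have "\<dots> = ?part 0 @ ?part 1 @ ?part 2 @ ?part 3"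
    by (simp add: upt_rec numeral_eq_Suc)
  finally have "?M = ?part 0 @ ?part 1 @ ?part 2 @ ?part 3" .
  moreover have in_part: "set (?part 1) = {e \<in> edges G. tgt G e = v}"
    using mem in_edge_of_strip_vertex_in_cut[OF k v] cut_sub_edges
    by (auto simp: star_rank_def)
  moreover have out_part: "set (?part 2) = {e \<in> edges G. src G e = v}"
    using mem cut_sub_edges by (auto simp: star_rank_def dest: src_ne_tgt split: if_splits)
  moreover have "?part 1 \<noteq> []"
  proof -
    obtain e where "e \<in> edges G" "tgt G e = v" using internal_has_in_edge vp by blast
    then have "e \<in> set (?part 1)" using in_part by blast
    then show ?thesis by (metis empty_iff empty_set)
  qed
  moreover have "\<forall>x\<in>set (?part 0) \<union> set (?part 3). x \<in> cut_edges (k-1) \<and> tgt G x \<noteq> v"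
    using mem by (auto simp: star_rank_def split: if_splits)
  moreover have "\<forall>x\<in>set (?part 1). x \<in> cut_edges (k-1) \<and> tgt G x = v"
    using in_part in_edge_of_strip_vertex_in_cut[OF k v] by auto
  moreover have "\<forall>x\<in>set (?part 2). x \<notin> cut_edges (k-1)"
    using out_part out_not_cut by auto
  ultimately show ?thesis using that by blast
qed

subsection \<open>The invariant of the layer-by-layer construction\<close>

definition layer_inv :: "nat \<Rightarrow> 'e list \<Rightarrow> bool" where
  "layer_inv j L \<longleftrightarrow> distinct L \<and> set L = upper_edges j \<and> planar_wrt (edge_reach G) L \<and>
     (j < n \<longrightarrow> sorted_wrt (\<lambda>e f. x_at e (ys j) < x_at f (ys j)) (filter (\<lambda>e. e \<in> cut_edges j) L))"

lemma layer_inv_cut_filter: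
  assumes k: "1 \<le> k" "k \<le> n" and inv: "layer_inv (k-1) L"
  shows "filter (\<lambda>e. e \<in> cut_edges (k-1)) L = filter (\<lambda>e. e \<in> cut_edges (k-1)) (Ls k)"
proof (rule sorted_wrt_key_unique)
  show "sorted_wrt (\<lambda>e f. x_at e (ys (k-1)) < x_at f (ys (k-1))) (filter (\<lambda>e. e \<in> cut_edges (k-1)) L)"
    using inv k unfolding layer_inv_def by auto
  show "sorted_wrt (\<lambda>e f. x_at e (ys (k-1)) < x_at f (ys (k-1))) (filter (\<lambda>e. e \<in> cut_edges (k-1)) (Ls k))"
    using layer_order_upper_cut_sorted[OF k] .
  show "set (filter (\<lambda>e. e \<in> cut_edges (k-1)) L) = set (filter (\<lambda>e. e \<in> cut_edges (k-1)) (Ls k))"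
    using inv cut_sub_upper layer_order(2)[OF k] layer_edges_iff[OF k] unfolding layer_inv_def by auto
qed

lemma layer_inv_0: "layer_inv 0 (filter (\<lambda>e. e \<in> cut_edges 0) (Ls 1))"
proof -
  have k: "1 \<le> (1::nat)" "1 \<le> n" using n_pos by auto
  let ?L = "filter (\<lambda>e. e \<in> cut_edges 0) (Ls 1)"
  have set_L: "set ?L = upper_edges 0" using layer_order(2)[OF k] layer_edges_iff[OF k] cut_0 by auto
  have no_reach: "\<not> edge_reach G x z" if "x \<in> upper_edges 0" "z \<in> upper_edges 0" for x z
    using cut_not_reach_upper cut_0 that by blast
  have "planar_wrt (edge_reach G) ?L"
    unfolding planar_wrt_def
  proof (intro conjI allI impI)
    fix x y z assume "list_prec ?L x y \<and> list_prec ?L y z \<and> edge_reach G x z"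
    then show "edge_reach G x y \<or> edge_reach G y z"
      using no_reach set_L list_prec_in_set[of ?L x y] list_prec_in_set[of ?L y z] by blast
  qed (use no_reach set_L in blast)
  moreover have "sorted_wrt (\<lambda>e f. x_at e (ys 0) < x_at f (ys 0)) (filter (\<lambda>e. e \<in> cut_edges 0) ?L)"
    using layer_order_upper_cut_sorted[OF k] by simp
  moreover have "distinct ?L" using layer_order(1)[OF k] by simp
  ultimately show ?thesis unfolding layer_inv_def using set_L by blast
qed

lemma layer_step_no_vertex:
  assumes k: "1 \<le> k" "k \<le> n" and empty: "strip k = {}" and inv: "layer_inv (k-1) L"
  shows "expand (\<lambda>e. e \<in> cut_edges (k-1)) L (blocks (\<lambda>e. e \<in> cut_edges (k-1)) (Ls k)) = L"
    and "layer_inv k L"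
proof -
  let ?cut = "\<lambda>e. e \<in> cut_edges (k-1)"
  have all_cut: "\<forall>x\<in>set (Ls k). x \<in> cut_edges (k-1)"
    using layer_order(2)[OF k] layer_edges_iff[OF k] empty by auto
  have filter_L: "filter ?cut L = Ls k"
    using layer_inv_cut_filter[OF k inv] all_cut by (simp add: filter_id_conv)
  have "blocks ?cut (Ls k) = map (\<lambda>x. (x, [])) (Ls k)"
    using blocks_all[of "Ls k" ?cut "[]"] all_cut by auto
  then show "expand ?cut L (blocks ?cut (Ls k)) = L"
    using expand_empty_blocks[OF filter_L] by simp
  have "upper_edges k = upper_edges (k-1)" using upper_step[OF k] empty by auto
  moreover have "filter (\<lambda>e. e \<in> cut_edges k) L = Ls k" and "filter (\<lambda>e. e \<in> cut_edges k) (Ls k) = Ls k"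
    if kn: "k < n"
  proof -
    have "x \<in> cut_edges k \<longleftrightarrow> x \<in> cut_edges (k-1)" for x using cut_step[OF k(1) kn] empty by auto
    then show "filter (\<lambda>e. e \<in> cut_edges k) L = Ls k" "filter (\<lambda>e. e \<in> cut_edges k) (Ls k) = Ls k"
      using filter_L all_cut by (simp_all add: filter_id_conv)
  qed
  ultimately show "layer_inv k L"
    using inv layer_order_lower_cut_sorted[OF k(1)] unfolding layer_inv_def by auto
qed

lemma layer_order_head_in_cut:
  assumes k: "1 \<le> k" "k \<le> n"
  shows "Ls k = [] \<or> hd (Ls k) \<in> cut_edges (k-1)"
proof (cases "strip k = {}")
  case True
  then show ?thesis using layer_order(2)[OF k] layer_edges_iff[OF k] by (cases "Ls k") auto
next
  case False
  then obtain v where v: "v \<in> strip k" by auto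
  obtain A Is N B where "Ls k = A @ Is @ N @ B" "Is \<noteq> []"
    "\<forall>x\<in>set A \<union> set B. x \<in> cut_edges (k-1) \<and> tgt G x \<noteq> v"
    "\<forall>x\<in>set Is. x \<in> cut_edges (k-1) \<and> tgt G x = v"
    by (rule layer_order_decomposition[OF k v])
  then show ?thesis by (cases A; cases Is) auto
qed

end

text \<open>The canonical order of the layer is \<open>A @ Is @ N @ B\<close> with \<open>Is\<close> the in-edges and \<open>N\<close> the
  out-edges of \<open>v\<close>; composing inserts \<open>N\<close> into \<open>L\<close> right after \<open>r\<close>, the last in-edge.\<close>

locale vertex_layer = layered_embedding G pV pE a b c d ys n Ls
  for G :: "('v, 'e) pgraph" and pV pE a b c d ys n Ls +
  fixes k :: nat and v :: 'v and L A Is N B :: "'e list"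
  assumes k: "1 \<le> k" "k \<le> n" and v: "v \<in> strip k" and inv: "layer_inv (k-1) L"
    and layer: "Ls k = A @ Is @ N @ B" and Is_nonempty: "Is \<noteq> []"
    and A_B_cut: "\<forall>x\<in>set A \<union> set B. x \<in> cut_edges (k-1) \<and> tgt G x \<noteq> v"
    and Is_cut: "\<forall>x\<in>set Is. x \<in> cut_edges (k-1) \<and> tgt G x = v"
    and N_not_cut: "\<forall>x\<in>set N. x \<notin> cut_edges (k-1)"
    and set_Is: "set Is = {e \<in> edges G. tgt G e = v}"
    and set_N: "set N = {e \<in> edges G. src G e = v}"
begin

definition r :: 'e where "r = last Is"

definition before :: "'e list" where "before = takeWhile (\<lambda>e. e \<noteq> r) L"

definition after :: "'e list" where "after = tl (dropWhile (\<lambda>e. e \<noteq> r) L)"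

abbreviation (input) cut :: "'e \<Rightarrow> bool" where "cut e \<equiv> e \<in> cut_edges (k-1)"

lemma strip_eq: "strip k = {v}"
  using strip_unique[OF k v] v by blast

lemma Is_snoc: "Is = butlast Is @ [r]"
  unfolding r_def using Is_nonempty by simp

lemma set_Is_snoc: "set Is = insert r (set (butlast Is))"
proof -
  have "set Is = set (butlast Is @ [r])" using Is_snoc by (rule arg_cong)
  then show ?thesis by simp
qed

lemma r_cut: "r \<in> cut_edges (k-1)" "tgt G r = v"
  using Is_cut set_Is_snoc by auto

lemma distinct_L: "distinct L" and set_L: "set L = upper_edges (k-1)"
  and planar_L: "planar_wrt (edge_reach G) L"
  using inv unfolding layer_inv_def by auto

lemma filter_cut_L: "filter cut L = A @ butlast Is @ r # B"
proof -
  have "filter cut (Ls k) = A @ Is @ B"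
    using A_B_cut Is_cut N_not_cut unfolding layer by (auto simp: filter_id_conv filter_empty_conv)
  then show ?thesis using layer_inv_cut_filter[OF k inv] Is_snoc by simp
qed

lemma L_split: "L = before @ r # after"
proof -
  have "r \<in> set L" using r_cut set_L cut_sub_upper by auto
  then have ne: "dropWhile (\<lambda>e. e \<noteq> r) L \<noteq> []" by (simp add: dropWhile_eq_Nil_conv)
  then have "hd (dropWhile (\<lambda>e. e \<noteq> r) L) = r" using hd_dropWhile by blast
  then have "dropWhile (\<lambda>e. e \<noteq> r) L = r # after"
    unfolding after_def using ne by (metis list.collapse)
  then show ?thesis unfolding before_def by (metis takeWhile_dropWhile_id)
qed

lemma filter_before: "filter cut before = A @ butlast Is" and filter_after: "filter cut after = B"
proof -
  have "r \<notin> set before" "r \<notin> set after"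
    using distinct_L by (subst (asm) L_split, simp)+
  then have r: "r \<notin> set (filter cut before)" "r \<notin> set (filter cut after)"
    by auto
  have "filter cut before @ r # filter cut after = filter cut L"
    using r_cut by (subst (2) L_split) simp
  also have "\<dots> = (A @ butlast Is) @ r # B" using filter_cut_L by simp
  finally show "filter cut before = A @ butlast Is" "filter cut after = B"
    using append_Cons_eq_iff[OF r] by blast+
qed

lemma expand_layer: "expand cut L (blocks cut (Ls k)) = before @ r # N @ after"
proof -
  have blocks: "blocks cut (Ls k) = map (\<lambda>x. (x, [])) (A @ butlast Is) @ (r, N) # map (\<lambda>x. (x, [])) B"
  proof -
    have eq: "Ls k = (A @ butlast Is) @ r # N @ B" using layer Is_snoc by (metis append.assoc append_Cons append_Nil)
    have "\<forall>x\<in>set (A @ butlast Is). cut x" using A_B_cut Is_cut in_set_butlastD by fastforce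
    then show ?thesis
      unfolding eq by (rule blocks_one_block[where P = cut]) (use A_B_cut N_not_cut r_cut in auto)
  qed
  have "filter cut before = map fst (map (\<lambda>x. (x, [])) (A @ butlast Is))"
    using filter_before by (simp add: comp_def)
  then have "expand cut L (blocks cut (Ls k)) =
      expand cut before (map (\<lambda>x. (x, [])) (A @ butlast Is)) @ expand cut (r # after) ((r, N) # map (\<lambda>x. (x, [])) B)"
    unfolding blocks by (subst L_split) (rule expand_append)
  also have "\<dots> = before @ r # N @ after"
    using expand_empty_blocks[OF filter_before] expand_empty_blocks[OF filter_after] r_cut by simp
  finally show ?thesis .
qed

lemma set_expand_layer: "set (before @ r # N @ after) = upper_edges k"
proof -
  have "set (before @ r # N @ after) = set (before @ r # after) \<union> set N" by auto
  also have "\<dots> = upper_edges (k-1) \<union> set N" using set_L by (simp only: L_split[symmetric])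
  also have "\<dots> = upper_edges k" using upper_step[OF k] set_N strip_eq by auto
  finally show ?thesis .
qed

lemma distinct_expand_layer: "distinct (before @ r # N @ after)"
proof -
  have "set N \<inter> upper_edges (k-1) = {}"
    using set_N strip_internalD[OF v k] unfolding upper_edges_def by auto
  moreover have "distinct N" using layer_order(1)[OF k] layer by simp
  moreover have "distinct (before @ r # after)" "set (before @ r # after) = upper_edges (k-1)"
    using distinct_L set_L by (simp_all only: L_split[symmetric])
  ultimately show ?thesis by auto
qed

lemma in_edge_before_r:
  assumes w: "w \<in> set Is"
  shows "w = r \<or> list_prec L w r"
proof (cases "w = r")
  case False
  then have "w \<in> set (butlast Is)" using w set_Is_snoc by simp
  then have "list_prec (filter cut L) w r"
    using list_prec_append[of w "A @ butlast Is" r "r # B"] unfolding filter_cut_L by simp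
  then show ?thesis using list_prec_filter[OF distinct_L] by blast
qed simp

lemma cut_between_in_edges:
  assumes u: "u \<in> cut_edges (k-1)" and w: "w \<in> set Is"
    and wu: "list_prec L w u" and ur: "list_prec L u r"
  shows "u \<in> set Is"
proof (rule ccontr)
  let ?K = "A @ butlast Is @ r # B"
  have dK: "distinct ?K" using distinct_L filter_cut_L distinct_filter by metis
  have K: "list_prec ?K w u" "list_prec ?K u r"
    using wu ur list_prec_filter[OF distinct_L, of cut] u r_cut Is_cut w unfolding filter_cut_L by auto
  assume "u \<notin> set Is"
  then have "u \<in> set A \<or> u \<in> set B"
    using list_prec_in_set[OF K(1)] set_Is_snoc by auto
  then show False
  proof
    assume "u \<in> set A"
    moreover have "w \<in> set (butlast Is @ r # B)" using w set_Is_snoc by auto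
    ultimately have "list_prec ?K u w" using list_prec_append[of u A w "butlast Is @ r # B"] by simp
    then show False using K list_prec_asym[OF dK] by blast
  next
    assume "u \<in> set B"
    then have "list_prec ?K r u" using list_prec_append[of r "A @ butlast Is @ [r]" u B] by simp
    then show False using K list_prec_asym[OF dK] by blast
  qed
qed

lemma planar_expand_layer: "planar_wrt (edge_reach G) (before @ r # N @ after)"
proof -
  have L: "before @ r # after = L" by (rule L_split[symmetric])
  interpret planar_insertion "edge_reach G" before after N r "set Is" "cut_edges (k-1)"
  proof
    show "distinct (before @ r # N @ after)" by (rule distinct_expand_layer)
    show "planar_wrt (edge_reach G) (before @ r # after)" using planar_L unfolding L .
    show "set Is \<subseteq> cut_edges (k-1)" using Is_cut by auto
    show "cut_edges (k-1) \<subseteq> set (before @ r # after)" using set_L cut_sub_upper unfolding L by auto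
    show "r \<in> set Is" using set_Is_snoc by simp
    show "u \<in> set Is" if "u \<in> cut_edges (k-1)" "w \<in> set Is"
      "list_prec (before @ r # after) w u" "list_prec (before @ r # after) u r" for u w
      using cut_between_in_edges that unfolding L by blast
    show "w = r \<or> list_prec (before @ r # after) w r" if "w \<in> set Is" for w
      using in_edge_before_r that unfolding L by blast
    show "\<not> edge_reach G u z" if "u \<in> cut_edges (k-1)" "z \<in> set (before @ r # after)" for u z
      using cut_not_reach_upper that set_L unfolding L by blast
    show "y \<in> cut_edges (k-1) \<or> (\<exists>u\<in>cut_edges (k-1). edge_reach G y u)"
      if "y \<in> set (before @ r # after)" for y
      using reaches_cut[of "k-1"] that set_L k unfolding L by auto
    show "\<not> edge_reach G x z" if "x \<in> set N" "z \<in> set (before @ r # N @ after)" for x z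
      using strip_out_edge_not_reach_upper[OF k] that set_N v set_expand_layer by auto
    show "edge_reach G x z \<longleftrightarrow> x \<in> set Is \<or> (\<exists>w\<in>set Is. edge_reach G x w)"
      if "x \<in> set (before @ r # after)" "z \<in> set N" for x z
    proof -
      have "x \<in> edges G" using that set_L upper_sub_edges unfolding L by auto
      moreover have "z \<in> edges G" "src G z = v" using that set_N by auto
      ultimately show ?thesis
        using edge_reach_iff_into_src[of x z] set_Is edge_reach_height by auto
    qed
  qed
  show ?thesis by (rule planar_new)
qed

lemma lower_cut_expand_layer:
  assumes kn: "k < n"
  shows "filter (\<lambda>e. e \<in> cut_edges k) (before @ r # N @ after) = filter (\<lambda>e. e \<in> cut_edges k) (Ls k)"
proof -
  have cut_k: "e \<in> cut_edges k \<longleftrightarrow> cut e \<and> tgt G e \<noteq> v" if "e \<in> upper_edges (k-1)" for e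
  proof -
    have "src G e \<notin> strip k" using that strip_internalD[OF v k] strip_eq unfolding upper_edges_def by auto
    then show ?thesis using cut_step[OF k(1) kn, of e] strip_eq by auto
  qed
  have "set (before @ r # after) = upper_edges (k-1)"
    using set_L by (simp only: L_split[symmetric])
  then have before_after: "set before \<union> set after \<subseteq> upper_edges (k-1)" by auto
  have "filter (\<lambda>e. e \<in> cut_edges k) before = filter (\<lambda>e. tgt G e \<noteq> v) (filter cut before)"
    unfolding filter_filter by (rule filter_cong) (use cut_k before_after in auto)
  also have "\<dots> = A" using filter_before A_B_cut Is_cut
    by (simp add: filter_id_conv filter_empty_conv) (meson in_set_butlastD)
  finally have A: "filter (\<lambda>e. e \<in> cut_edges k) before = A" .
  have "filter (\<lambda>e. e \<in> cut_edges k) after = filter (\<lambda>e. tgt G e \<noteq> v) (filter cut after)"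
    unfolding filter_filter by (rule filter_cong) (use cut_k before_after in auto)
  also have "\<dots> = B" using filter_after A_B_cut by (simp add: filter_id_conv)
  finally have B: "filter (\<lambda>e. e \<in> cut_edges k) after = B" .
  have N: "\<forall>x\<in>set N. x \<in> cut_edges k" using cut_step[OF k(1) kn] set_N strip_eq by auto
  have "r \<notin> cut_edges k" using r_cut strip_internalD[OF v k] unfolding cut_edges_def by auto
  then have "filter (\<lambda>e. e \<in> cut_edges k) (before @ r # N @ after) = A @ N @ B"
    using A B N by (simp add: filter_id_conv)
  also have "\<dots> = filter (\<lambda>e. e \<in> cut_edges k) (Ls k)"
  proof -
    have "\<forall>x\<in>set A \<union> set B. x \<in> cut_edges k" using A_B_cut cut_k cut_sub_upper by blast
    moreover have "\<forall>x\<in>set Is. x \<notin> cut_edges k" using Is_cut cut_k cut_sub_upper by blast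
    ultimately show ?thesis using layer N by (simp add: filter_id_conv filter_empty_conv)
  qed
  finally show ?thesis .
qed

lemma layer_inv_expand_layer: "layer_inv k (before @ r # N @ after)"
  unfolding layer_inv_def
  using distinct_expand_layer set_expand_layer planar_expand_layer
    lower_cut_expand_layer layer_order_lower_cut_sorted[OF k(1)] by auto

end

context layered_embedding
begin

lemma layer_step:
  assumes k: "1 \<le> k" "k \<le> n" and inv: "layer_inv (k-1) L"
  shows "layer_inv k (expand (\<lambda>e. e \<in> cut_edges (k-1)) L (blocks (\<lambda>e. e \<in> cut_edges (k-1)) (Ls k)))"
proof (cases "strip k = {}")
  case True
  then show ?thesis using layer_step_no_vertex[OF k True inv] by simp
next
  case False
  then obtain v where v: "v \<in> strip k" by auto
  obtain A Is N B where "Ls k = A @ Is @ N @ B" "Is \<noteq> []"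
    "\<forall>x\<in>set A \<union> set B. x \<in> cut_edges (k-1) \<and> tgt G x \<noteq> v"
    "\<forall>x\<in>set Is. x \<in> cut_edges (k-1) \<and> tgt G x = v" "\<forall>x\<in>set N. x \<notin> cut_edges (k-1)"
    "set Is = {e \<in> edges G. tgt G e = v}" "set N = {e \<in> edges G. src G e = v}"
    by (rule layer_order_decomposition[OF k v])
  then interpret vertex_layer G pV pE a b c d ys n Ls k v L A Is N B
    using progressive upward layers canonical k v inv by unfold_locales blast+
  show ?thesis using layer_inv_expand_layer expand_layer by simp
qed

primrec prefix_order :: "nat \<Rightarrow> 'e list" where
  "prefix_order 0 = filter (\<lambda>e. e \<in> cut_edges 0) (Ls 1)"
| "prefix_order (Suc k) =
     expand (\<lambda>e. e \<in> cut_edges k) (prefix_order k) (blocks (\<lambda>e. e \<in> cut_edges k) (Ls (Suc k)))"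

lemma layer_inv_prefix_order: "k \<le> n \<Longrightarrow> layer_inv k (prefix_order k)"
proof (induction k)
  case 0
  show ?case using layer_inv_0 by simp
next
  case (Suc k)
  then show ?case using layer_step[of "Suc k" "prefix_order k"] by simp
qed

lemma prefix_order_1: "prefix_order 1 = Ls 1"
proof -
  have "Ls 1 = [] \<or> hd (Ls 1) \<in> cut_edges 0" using layer_order_head_in_cut[of 1] n_pos by simp
  then show ?thesis using expand_filter_blocks[of "Ls 1" "\<lambda>e. e \<in> cut_edges 0"] by simp
qed

lemma comp_upto_prefix_order:
  "1 \<le> k \<Longrightarrow> k \<le> n \<Longrightarrow>
    comp_upto Ls (layer_in G pV ys) (layer_out G pV ys) k = map (\<lambda>e. (e, e)) (prefix_order k)"
proof (induction k)
  case (Suc k)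
  show ?case
  proof (cases "k = 0")
    case True
    then show ?thesis using prefix_order_1 by simp
  next
    case False
    let ?cut = "\<lambda>e. e \<in> cut_edges k"
    have "layer_in G pV ys (Suc k) = ?cut" "layer_out G pV ys k = ?cut"
      using layer_in_iff_cut[of "Suc k"] layer_out_iff_cut[of k] Suc.prems False by auto
    moreover have "filter ?cut (prefix_order k) = map fst (blocks ?cut (Ls (Suc k)))"
      using layer_inv_cut_filter[of "Suc k"] layer_inv_prefix_order[of k] Suc.prems
      by (simp add: map_fst_blocks)
    ultimately show ?thesis
      using Suc False comp_list_diag by simp
  qed
qed simp

lemma planar_order_phi_order: "planar_order G (phi_order G pV ys Ls n)"
proof -
  have "phi_order G pV ys Ls n = prefix_order n"
    unfolding phi_order_def using comp_upto_prefix_order[of n] n_pos by (simp add: comp_def)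
  moreover have "distinct (prefix_order n)" "set (prefix_order n) = edges G"
    "planar_wrt (edge_reach G) (prefix_order n)"
    using layer_inv_prefix_order[of n] upper_n unfolding layer_inv_def by auto
  ultimately show ?thesis
    unfolding planar_order_def planar_wrt_def using edge_reach_height by auto
qed

end

theorem proposition1p1:
  fixes G :: "('v, 'e) pgraph"
    and pV :: "'v \<Rightarrow> real \<times> real"
    and pE :: "'e \<Rightarrow> real \<Rightarrow> real \<times> real"
    and a b c d :: real
    and ys :: "nat \<Rightarrow> real"
    and n :: nat
    and Ls :: "nat \<Rightarrow> 'e list"
  assumes "progressive_graph G"
    and "upward_BP_embedding G pV pE a b c d"
    and "layer_decomposition G pV c d ys n"
    and "\<forall>j \<in> {1..n}. canonical_layer_order G pV pE ys j (Ls j)"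
  shows "planar_order G (phi_order G pV ys Ls n)"
proof -
  interpret layered_embedding G pV pE a b c d ys n Ls
    using assms by unfold_locales
  show ?thesis by (rule planar_order_phi_order)
qed

end
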